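(* Let $\lambda,\mu,\alpha>0$. For $x\in\mathbb{Z}^+$ let $\xi_x(t)$, $t\ge0$, denote the Poisson process with uniform catastrophes with parameters $\lambda,\mu,\alpha$ started from $\xi_x(0)=x$ (defined in the context). Then for any $x,y\in\mathbb{Z}^+$ there exist random processes $\tilde\xi(t)$ and $\hat\xi(t)$, $t\ge0$, defined on a common probability space, such that $\tilde\xi$ has the same distribution as $\xi_x$, $\hat\xi$ has the same distribution as $\xi_y$, and $$\mathbf{P}\Big(\sup_{t\ge0}|\tilde\xi(t)-\hat\xi(t)|\le|x-y|\Big)=1.$$
   Context: Let $\eta$ be a Markov chain on $\mathbb{Z}^+=\{0,1,2,\dots\}$ with transition probabilities $\mathbf{P}(\eta(n+1)=j\mid\eta(n)=i)=\frac{\lambda}{\lambda+\mu}$ if $j=i+1$ (and $i\ge1$), $=\frac{\mu}{i(\lambda+\mu)}$ if $0\le j<i$, $i\neq0$, and $=1$ if $i=0$, $j=1$. Let $\nu(t)$ be a Poisson process of rate $\alpha$ independent of $\eta$. The process $\xi_x(t):=\eta(\nu(t))$ where $\eta(0)=x$ is the Poisson process with uniform catastrophes started at $x$ (equivalently, a continuous-time Markov chain which at rate $\alpha$ makes a step of the chain $\eta$). *)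

theory Defs
  imports "HOL-Probability.Probability"
begin

definition ucat_kernel :: "real \<Rightarrow> real \<Rightarrow> nat \<Rightarrow> nat \<Rightarrow> real" where
  "ucat_kernel lam mu i j =
     (if i = 0 then (if j = 1 then 1 else 0)
      else if j = i + 1 then lam / (lam + mu)
      else if j < i then mu / (real i * (lam + mu))
      else 0)"

text \<open>n-step transition probabilities of eta (a step from i only reaches states \<le> i+1).\<close>
fun ucat_kernel_pow :: "real \<Rightarrow> real \<Rightarrow> nat \<Rightarrow> nat \<Rightarrow> nat \<Rightarrow> real" where
  "ucat_kernel_pow lam mu 0 i j = (if i = j then 1 else 0)"
| "ucat_kernel_pow lam mu (Suc n) i j =
     (\<Sum>k\<le>i+1. ucat_kernel lam mu i k * ucat_kernel_pow lam mu n k j)"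

text \<open>Transition probabilities of xi(t) = eta(nu(t)), nu a Poisson process of rate alpha:
  P_t(i,j) = sum_n e^{-alpha t} (alpha t)^n / n! * K^n(i,j).\<close>
definition ucat_trans :: "real \<Rightarrow> real \<Rightarrow> real \<Rightarrow> real \<Rightarrow> nat \<Rightarrow> nat \<Rightarrow> real" where
  "ucat_trans lam mu alpha t i j =
     (\<Sum>n. exp (- alpha * t) * (alpha * t) ^ n / fact n * ucat_kernel_pow lam mu n i j)"

text \<open>X (on the probability space M) has the same distribution as the Poisson process with
  uniform catastrophes started at x: every X t (t \<ge> 0) is a random variable, and all
  finite-dimensional distributions agree with those of xi_x (which determine the law
  on the product sigma-algebra of paths).\<close>
definition ucat_process ::
  "real \<Rightarrow> real \<Rightarrow> real \<Rightarrow> nat \<Rightarrow> 'a measure \<Rightarrow> (real \<Rightarrow> 'a \<Rightarrow> nat) \<Rightarrow> bool" where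
  "ucat_process lam mu alpha x M X \<longleftrightarrow>
     (\<forall>t\<ge>0. X t \<in> measurable M (count_space UNIV)) \<and>
     (\<forall>(n::nat) (ts::nat \<Rightarrow> real) (ks::nat \<Rightarrow> nat).
        (0 < n \<longrightarrow> 0 \<le> ts 0) \<and> (\<forall>i. Suc i < n \<longrightarrow> ts i \<le> ts (Suc i)) \<longrightarrow>
        measure M {\<omega> \<in> space M. \<forall>i<n. X (ts i) \<omega> = ks i} =
          (\<Prod>i<n. ucat_trans lam mu alpha
                     (ts i - (if i = 0 then 0 else ts (i - 1)))
                     (if i = 0 then x else ks (i - 1)) (ks i)))"

end

theory Submission
  imports Defs
begin

text \<open>Both processes are driven by the same randomness: one Poisson clock of rate \<open>\<alpha>\<close> and one i.i.d.
  uniform sequence that drives the jump chain \<open>\<eta>\<close>. A uniform \<open>v\<close> moves the chain from \<open>i > 0\<close> up to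
  \<open>i + 1\<close> if \<open>v < q = \<lambda> / (\<lambda> + \<mu>)\<close> and otherwise down to \<open>\<lfloor>i (v - q) / (1 - q)\<rfloor>\<close>, which is uniform
  on \<open>{0, \<dots>, i - 1}\<close>. For fixed \<open>v\<close> this update is 1-Lipschitz in \<open>i\<close>, so the chains started at
  \<open>x\<close> and \<open>y\<close>, and hence the two time-changed processes, stay within \<open>|x - y|\<close> on every sample.

  The clock is assembled from unit time blocks,
  each carrying a Poisson(\<open>\<alpha>\<close>) number of uniform marks. Sorting the marks of a block into the
  cells of a partition gives independent Poisson counts by the multinomial theorem, and summing over
  blocks keeps them Poisson. Conditioning on the increments of the clock then factorises the law
  of the time-changed chain into the Poisson mixtures \<^const>\<open>ucat_trans\<close>. Finally the two
  independent sequences are interleaved into a single sequence of reals.\<close>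

section \<open>A monotone uniform representation of the jump chain\<close>

text \<open>Uniform variables lie in \<open>(0, 1)\<close> only almost surely; sending the null set to \<open>1/2\<close>
  makes the coupling hold on every sample.\<close>

definition to_unit_open :: "real \<Rightarrow> real" where
  "to_unit_open v = (if 0 < v \<and> v < 1 then v else 1/2)"

definition jump_step :: "real \<Rightarrow> real \<Rightarrow> nat \<Rightarrow> real \<Rightarrow> nat" where
  "jump_step lam mu i v = (let q = lam / (lam + mu); w = to_unit_open v in
     if w < q then i + 1 else if i = 0 then 1 else nat \<lfloor>(w - q) / (1 - q) * real i\<rfloor>)"

primrec jump_chain :: "real \<Rightarrow> real \<Rightarrow> nat \<Rightarrow> (nat \<Rightarrow> real) \<Rightarrow> nat \<Rightarrow> nat" where
  "jump_chain lam mu x u 0 = x"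
| "jump_chain lam mu x u (Suc n) = jump_step lam mu (jump_chain lam mu x u n) (u n)"

lemma to_unit_open_bounds: "0 < to_unit_open v" "to_unit_open v < 1"
  by (auto simp: to_unit_open_def)

lemma floor_mult_lipschitz:
  fixes w :: real and i j :: nat
  assumes "0 \<le> w" "w \<le> 1"
  shows "\<bar>\<lfloor>w * real i\<rfloor> - \<lfloor>w * real j\<rfloor>\<bar> \<le> \<bar>int i - int j\<bar>"
proof -
  have "\<bar>w * real i - w * real j\<bar> = w * \<bar>real i - real j\<bar>"
    using assms by (simp add: abs_mult right_diff_distrib[symmetric])
  also have "\<dots> \<le> \<bar>real i - real j\<bar>"
    using assms by (simp add: mult_left_le_one_le)
  finally have "\<bar>w * real i - w * real j\<bar> \<le> \<bar>real i - real j\<bar>" .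
  moreover have "\<bar>real_of_int \<lfloor>w * real i\<rfloor> - real_of_int \<lfloor>w * real j\<rfloor>\<bar> < \<bar>w * real i - w * real j\<bar> + 1"
    by linarith
  ultimately show ?thesis
    by linarith
qed

lemma jump_step_lipschitz:
  assumes "lam > 0" "mu > 0"
  shows "\<bar>int (jump_step lam mu i v) - int (jump_step lam mu j v)\<bar> \<le> \<bar>int i - int j\<bar>"
proof -
  define q where "q = lam / (lam + mu)"
  define w where "w = to_unit_open v"
  define z where "z = (w - q) / (1 - q)"
  have q: "0 < q" "q < 1" using assms by (auto simp: q_def field_simps)
  have w: "0 < w" "w < 1" using to_unit_open_bounds by (auto simp: w_def)
  have step: "jump_step lam mu k v = (if w < q then k + 1 else if k = 0 then 1 else nat \<lfloor>z * real k\<rfloor>)" for k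
    by (simp add: jump_step_def q_def w_def z_def Let_def)
  show ?thesis
  proof (cases "w < q")
    case False
    then have z: "0 \<le> z" "z < 1" using q w by (auto simp: z_def field_simps)
    have down: "0 \<le> \<lfloor>z * real k\<rfloor> \<and> \<lfloor>z * real k\<rfloor> < int k" if "k > 0" for k
    proof -
      have "z * real k < real k" using z that by simp
      with z show ?thesis by (simp add: floor_less_iff)
    qed
    show ?thesis
      using down[of i] down[of j] floor_mult_lipschitz[of z i j] z False
      by (cases "i = 0"; cases "j = 0") (auto simp: step abs_le_iff simp del: zero_le_floor)
  qed (simp add: step)
qed

lemma jump_chain_lipschitz:
  assumes "lam > 0" "mu > 0"
  shows "\<bar>int (jump_chain lam mu x u n) - int (jump_chain lam mu y u n)\<bar> \<le> \<bar>int x - int y\<bar>"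
  by (induction n) (auto intro: order_trans[OF jump_step_lipschitz[OF assms]])

section \<open>The law of the jump chain\<close>

definition uniform01 :: "real measure" where
  "uniform01 = uniform_measure lborel {0<..<1}"

abbreviation uniform_seq :: "(nat \<Rightarrow> real) measure" where
  "uniform_seq \<equiv> PiM UNIV (\<lambda>_::nat. uniform01)"

lemma sets_uniform01 [simp, measurable_cong]: "sets uniform01 = sets borel"
  by (simp add: uniform01_def)

lemma space_uniform01 [simp]: "space uniform01 = UNIV"
  by (simp add: uniform01_def)

lemma prob_space_uniform01: "prob_space uniform01"
  unfolding uniform01_def by (rule prob_space_uniform_measure) auto

lemma emeasure_uniform01:
  "B \<in> sets borel \<Longrightarrow> emeasure uniform01 B = emeasure lborel ({0<..<1} \<inter> B)"
  by (simp add: uniform01_def divide_ennreal_def)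

lemma to_unit_open_measurable [measurable]: "to_unit_open \<in> borel_measurable borel"
  unfolding to_unit_open_def by measurable

lemma jump_step_measurable [measurable]:
  "jump_step lam mu i \<in> measurable borel (count_space UNIV)"
  unfolding jump_step_def Let_def by measurable

lemma jump_step_le:
  assumes "lam > 0" "mu > 0"
  shows "jump_step lam mu i v \<le> i + 1"
proof -
  define q where "q = lam / (lam + mu)"
  define w where "w = to_unit_open v"
  have q: "q < 1" using assms by (simp add: q_def field_simps)
  have "(w - q) / (1 - q) * real i \<le> real i" if "q \<le> w"
  proof -
    have "(w - q) / (1 - q) \<le> 1"
      using q to_unit_open_bounds[of v] that by (simp add: w_def field_simps)
    from mult_right_mono[OF this, of "real i"] show ?thesis by simp
  qed
  then show ?thesis
    by (auto simp: jump_step_def Let_def q_def[symmetric] w_def[symmetric] nat_le_iff floor_le_iff)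
qed

lemma ucat_kernel_nonneg: "lam > 0 \<Longrightarrow> mu > 0 \<Longrightarrow> 0 \<le> ucat_kernel lam mu i j"
  by (auto simp: ucat_kernel_def)

lemma ucat_kernel_row_sum:
  assumes "lam > 0" "mu > 0"
  shows "(\<Sum>k\<le>i+1. ucat_kernel lam mu i k) = 1"
proof (cases "i = 0")
  case False
  have "{..i+1} = {..<i} \<union> {i, i+1}" by auto
  then have "(\<Sum>k\<le>i+1. ucat_kernel lam mu i k) =
      (\<Sum>k<i. ucat_kernel lam mu i k) + ucat_kernel lam mu i i + ucat_kernel lam mu i (i+1)"
    by (simp add: sum.union_disjoint)
  also have "(\<Sum>k<i. ucat_kernel lam mu i k) = real i * (mu / (real i * (lam + mu)))"
    by (simp add: ucat_kernel_def)
  also have "\<dots> + ucat_kernel lam mu i i + ucat_kernel lam mu i (i+1) = mu / (lam + mu) + lam / (lam + mu)"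
    using False by (simp add: ucat_kernel_def)
  also have "\<dots> = 1"
    using assms by (simp add: add_divide_distrib[symmetric])
  finally show ?thesis .
qed (simp add: ucat_kernel_def)

lemma ucat_kernel_pow_nonneg: "lam > 0 \<Longrightarrow> mu > 0 \<Longrightarrow> 0 \<le> ucat_kernel_pow lam mu n i j"
proof (induction n arbitrary: i)
  case (Suc n)
  then show ?case
    unfolding ucat_kernel_pow.simps by (intro sum_nonneg mult_nonneg_nonneg ucat_kernel_nonneg) auto
qed simp

lemma ucat_kernel_pow_le_1:
  assumes "lam > 0" "mu > 0"
  shows "ucat_kernel_pow lam mu n i j \<le> 1"
proof (induction n arbitrary: i)
  case (Suc n)
  have "ucat_kernel_pow lam mu (Suc n) i j \<le> (\<Sum>k\<le>i+1. ucat_kernel lam mu i k)"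
    unfolding ucat_kernel_pow.simps
    using Suc by (intro sum_mono) (simp add: ucat_kernel_nonneg[OF assms] mult_left_le)
  also have "\<dots> = 1" by (rule ucat_kernel_row_sum[OF assms])
  finally show ?case .
qed simp

lemma floor_rescaled_eq_iff:
  fixes q v :: real and i j :: nat
  assumes "0 < q" "q < 1" "i > 0" "q \<le> v"
  shows "(v < 1 \<and> nat \<lfloor>(v - q) / (1 - q) * real i\<rfloor> = j) \<longleftrightarrow>
    j < i \<and> q + (1 - q) * real j / real i \<le> v \<and> v < q + (1 - q) * real (Suc j) / real i"
proof -
  define y where "y = (v - q) / (1 - q) * real i"
  have "0 \<le> y" using assms by (simp add: y_def)
  moreover have "v < 1 \<longleftrightarrow> y < real i"
    and "q + (1 - q) * real j / real i \<le> v \<longleftrightarrow> real j \<le> y"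
    and "v < q + (1 - q) * real (Suc j) / real i \<longleftrightarrow> y < real j + 1"
    using assms by (auto simp: y_def field_simps)
  ultimately show ?thesis
    unfolding y_def[symmetric] by linarith
qed

lemma jump_step_preimage:
  assumes "lam > 0" "mu > 0" "i > 0" and q: "q = lam / (lam + mu)"
  shows "{0<..<1} \<inter> {v. jump_step lam mu i v = j} =
    (if j = i + 1 then {0<..<q}
     else if j < i then {q + (1 - q) * real j / real i ..< q + (1 - q) * real (Suc j) / real i}
     else {})"
proof -
  have q01: "0 < q" "q < 1" using assms(1,2) unfolding q by (auto simp: field_simps)
  have step: "jump_step lam mu i v = (if v < q then i + 1 else nat \<lfloor>(v - q) / (1 - q) * real i\<rfloor>)"
    if "0 < v" "v < 1" for v
    using that assms by (simp add: jump_step_def to_unit_open_def Let_def)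
  have "(v \<in> {0<..<1} \<and> jump_step lam mu i v = j) \<longleftrightarrow>
    v \<in> (if j = i + 1 then {0<..<q}
         else if j < i then {q + (1 - q) * real j / real i ..< q + (1 - q) * real (Suc j) / real i}
         else {})" for v
  proof (cases "v < q")
    case True
    have "q \<le> q + (1 - q) * real j / real i" using q01 by simp
    then have "v \<notin> {q + (1 - q) * real j / real i ..< q + (1 - q) * real (Suc j) / real i}"
      using True by simp
    then show ?thesis using True q01 step[of v] by auto
  next
    case False
    then show ?thesis
      using floor_rescaled_eq_iff[OF q01 \<open>i > 0\<close>, of v j] q01 step[of v] by auto
  qed
  then show ?thesis by blast
qed

lemma emeasure_jump_step:
  assumes "lam > 0" "mu > 0"
  shows "emeasure uniform01 {v. jump_step lam mu i v = j} = ennreal (ucat_kernel lam mu i j)"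
proof -
  define q where "q = lam / (lam + mu)"
  have q01: "0 < q" "q < 1" using assms by (auto simp: q_def field_simps)
  have E: "emeasure uniform01 {v. jump_step lam mu i v = j} =
      emeasure lborel ({0<..<1} \<inter> {v. jump_step lam mu i v = j})"
    by (rule emeasure_uniform01) measurable
  show ?thesis
  proof (cases "i = 0")
    case True
    then have "{v. jump_step lam mu i v = j} = (if j = 1 then UNIV else {})"
      by (simp add: jump_step_def Let_def)
    then show ?thesis
      using True prob_space.emeasure_space_1[OF prob_space_uniform01] by (simp add: ucat_kernel_def)
  next
    case i: False
    show ?thesis
    proof (cases "j = i + 1")
      case True
      then show ?thesis
        using i q01 unfolding E by (simp add: jump_step_preimage[OF assms _ q_def] ucat_kernel_def q_def)
    next
      case False
      define a b where "a = q + (1 - q) * real j / real i" and "b = q + (1 - q) * real (Suc j) / real i"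
      have "a \<le> b" using q01 by (simp add: a_def b_def divide_right_mono)
      moreover have "b - a = mu / (real i * (lam + mu))"
      proof -
        have "b - a = (1 - q) / real i"
          by (simp add: a_def b_def diff_divide_distrib[symmetric] algebra_simps)
        also have "\<dots> = mu / (real i * (lam + mu))"
          using assms by (simp add: q_def field_simps)
        finally show ?thesis .
      qed
      moreover have "{0<..<1} \<inter> {v. jump_step lam mu i v = j} = (if j < i then {a..<b} else {})"
        using jump_step_preimage[OF assms _ q_def] i False by (simp add: a_def b_def)
      ultimately show ?thesis
        using i False by (simp add: E ucat_kernel_def)
    qed
  qed
qed

lemma sequence_space_uniform01: "sequence_space uniform01"
  by (simp add: sequence_space_def product_prob_space_def prob_space_uniform01 product_sigma_finite_def
      prob_space_imp_sigma_finite product_prob_space_axioms_def)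

lemma space_uniform_seq [simp]: "space uniform_seq = UNIV"
  by (simp add: space_PiM PiE_UNIV_domain)

lemma prob_space_uniform_seq: "prob_space uniform_seq"
  by (intro prob_space_PiM prob_space_uniform01)

lemma jump_chain_measurable [measurable]:
  "(\<lambda>u. jump_chain lam mu x u n) \<in> measurable uniform_seq (count_space UNIV)"
proof (induction n)
  case (Suc n)
  have "(\<lambda>u. jump_step lam mu (jump_chain lam mu x u n) (u n)) \<in> measurable uniform_seq (count_space UNIV)"
    by (rule measurable_compose_countable'[where I=UNIV, OF _ Suc]) auto
  then show ?case by simp
qed simp

lemma nn_integral_jump_step:
  assumes "lam > 0" "mu > 0"
  shows "(\<integral>\<^sup>+ v. g (jump_step lam mu i v) \<partial>uniform01) = (\<Sum>k\<le>i+1. ennreal (ucat_kernel lam mu i k) * g k)"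
proof -
  have "(\<integral>\<^sup>+ v. g (jump_step lam mu i v) \<partial>uniform01) =
      (\<integral>\<^sup>+ v. (\<Sum>k\<le>i+1. g k * indicator {v. jump_step lam mu i v = k} v) \<partial>uniform01)"
  proof (rule nn_integral_cong)
    fix v
    have "(\<Sum>k\<le>i+1. g k * indicator {v. jump_step lam mu i v = k} v) =
        (\<Sum>k\<in>{jump_step lam mu i v}. g k * indicator {v. jump_step lam mu i v = k} v)"
      using jump_step_le[OF assms, of i v] by (intro sum.mono_neutral_right) (auto simp: indicator_def)
    then show "g (jump_step lam mu i v) = (\<Sum>k\<le>i+1. g k * indicator {v. jump_step lam mu i v = k} v)"
      by simp
  qed
  also have "\<dots> = (\<Sum>k\<le>i+1. \<integral>\<^sup>+ v. g k * indicator {v. jump_step lam mu i v = k} v \<partial>uniform01)"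
    by (rule nn_integral_sum) measurable
  also have "\<dots> = (\<Sum>k\<le>i+1. g k * emeasure uniform01 {v. jump_step lam mu i v = k})"
    by (intro sum.cong refl nn_integral_cmult_indicator) measurable
  finally show ?thesis
    by (simp add: emeasure_jump_step[OF assms] mult.commute)
qed

lemma jump_chain_case_nat:
  "jump_chain lam mu x (case_nat v u) (Suc n) = jump_chain lam mu (jump_step lam mu x v) u n"
  by (induction n) auto

lemma emeasure_jump_chain:
  assumes "lam > 0" "mu > 0"
  shows "emeasure uniform_seq {u. jump_chain lam mu x u n = y} = ennreal (ucat_kernel_pow lam mu n x y)"
proof (induction n arbitrary: x)
  case 0
  show ?case
    using prob_space.emeasure_space_1[OF prob_space_uniform_seq] by (cases "x = y") auto
next
  case (Suc n)
  interpret S: sequence_space uniform01 by (rule sequence_space_uniform01)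
  let ?A = "{u. jump_chain lam mu x u (Suc n) = y}"
  let ?cons = "\<lambda>(v, u). case_nat v u"
  have A: "?A \<in> sets uniform_seq"
    using measurable_sets[OF jump_chain_measurable, of "{y}"] by (simp add: vimage_def del: jump_chain.simps)
  have "emeasure uniform_seq ?A = emeasure (uniform01 \<Otimes>\<^sub>M uniform_seq) (?cons -` ?A \<inter> space (uniform01 \<Otimes>\<^sub>M uniform_seq))"
    by (subst S.PiM_iter[symmetric], rule emeasure_distr) (use A in auto)
  also have "\<dots> = (\<integral>\<^sup>+ v. emeasure uniform_seq {u. jump_chain lam mu (jump_step lam mu x v) u n = y} \<partial>uniform01)"
    by (subst S.emeasure_pair_measure_alt, use A in measurable)
       (intro nn_integral_cong arg_cong2[where f=emeasure] refl,
        simp del: jump_chain.simps add: space_pair_measure jump_chain_case_nat vimage_def)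
  also have "\<dots> = (\<Sum>k\<le>x+1. ennreal (ucat_kernel lam mu x k) * ennreal (ucat_kernel_pow lam mu n k y))"
    unfolding Suc by (rule nn_integral_jump_step[OF assms])
  also have "\<dots> = ennreal (\<Sum>k\<le>x+1. ucat_kernel lam mu x k * ucat_kernel_pow lam mu n k y)"
    using assms
    by (subst sum_ennreal[symmetric])
       (auto intro!: sum.cong simp: ennreal_mult ucat_kernel_nonneg ucat_kernel_pow_nonneg)
  also have "\<dots> = ennreal (ucat_kernel_pow lam mu (Suc n) x y)"
    by (simp only: ucat_kernel_pow.simps)
  finally show ?case .
qed

lemma jump_chain_comb_seq_le:
  "m \<le> n \<Longrightarrow> jump_chain lam mu x (comb_seq n u u') m = jump_chain lam mu x u m"
  by (induction m) (auto simp: comb_seq_less)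

lemma jump_chain_comb_seq_add:
  "jump_chain lam mu x (comb_seq n u u') (n + m) = jump_chain lam mu (jump_chain lam mu x u n) u' m"
proof (induction m)
  case (Suc m)
  have "comb_seq n u u' (n + m) = u' m"
    using comb_seq_add[of n u u' m] by (simp add: add.commute)
  then show ?case using Suc by simp
qed (simp add: jump_chain_comb_seq_le)

lemma sets_jump_chain_event:
  fixes r :: nat and m :: "nat \<Rightarrow> nat"
  shows "{u. \<forall>i<r. jump_chain lam mu x u (m i) = ks i} \<in> sets uniform_seq"
proof -
  have "{u \<in> space uniform_seq. \<forall>i<r. jump_chain lam mu x u (m i) = ks i} \<in> sets uniform_seq"
    by measurable
  then show ?thesis by simp
qed

lemma emeasure_uniform_seq_comb_seq:
  assumes "A \<in> sets uniform_seq" "B \<in> sets uniform_seq" "C \<in> sets uniform_seq"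
    and "(\<lambda>(u, u'). comb_seq n u u') -` C \<inter> space (uniform_seq \<Otimes>\<^sub>M uniform_seq) = A \<times> B"
  shows "emeasure uniform_seq C = emeasure uniform_seq A * emeasure uniform_seq B"
proof -
  interpret S: sequence_space uniform01 by (rule sequence_space_uniform01)
  have "emeasure uniform_seq C =
      emeasure (distr (uniform_seq \<Otimes>\<^sub>M uniform_seq) uniform_seq (\<lambda>(u, u'). comb_seq n u u')) C"
    by (simp add: S.PiM_comb_seq)
  also have "\<dots> = emeasure (uniform_seq \<Otimes>\<^sub>M uniform_seq) (A \<times> B)"
    by (subst emeasure_distr) (use assms in auto)
  also have "\<dots> = emeasure uniform_seq A * emeasure uniform_seq B"
    by (rule S.emeasure_pair_measure_Times[OF assms(1,2)])
  finally show ?thesis .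
qed

lemma comb_seq_jump_chain_event:
  fixes r :: nat and d ks :: "nat \<Rightarrow> nat"
  assumes "r > 0"
  shows "(\<lambda>(u, u'). comb_seq (\<Sum>i'\<le>r - 1. d i') u u') -`
      {u. \<forall>i<Suc r. jump_chain lam mu x u (\<Sum>i'\<le>i. d i') = ks i} \<inter> space (uniform_seq \<Otimes>\<^sub>M uniform_seq) =
    {u. \<forall>i<r. jump_chain lam mu x u (\<Sum>i'\<le>i. d i') = ks i} \<times>
      {u. jump_chain lam mu (ks (r - 1)) u (d r) = ks r}"
proof -
  define n where "n = (\<Sum>i'\<le>r - 1. d i')"
  define A where "A = {u. \<forall>i<r. jump_chain lam mu x u (\<Sum>i'\<le>i. d i') = ks i}"
  have "jump_chain lam mu x (comb_seq n u u') (\<Sum>i'\<le>i. d i') = jump_chain lam mu x u (\<Sum>i'\<le>i. d i')"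
    if "i < r" for i u u'
    using that by (intro jump_chain_comb_seq_le) (auto simp: n_def intro: sum_mono2)
  moreover have "jump_chain lam mu x (comb_seq n u u') (\<Sum>i'\<le>r. d i') =
      jump_chain lam mu (jump_chain lam mu x u n) u' (d r)" for u u'
    using assms jump_chain_comb_seq_add[of lam mu x n u u' "d r"] by (cases r) (simp_all add: n_def)
  ultimately have "comb_seq n u u' \<in> {u. \<forall>i<Suc r. jump_chain lam mu x u (\<Sum>i'\<le>i. d i') = ks i} \<longleftrightarrow>
      u \<in> A \<and> jump_chain lam mu (jump_chain lam mu x u n) u' (d r) = ks r" for u u'
    by (simp add: A_def All_less_Suc conj_commute)
  moreover have "u \<in> A \<Longrightarrow> jump_chain lam mu x u n = ks (r - 1)" for u
    using assms by (auto simp: A_def n_def)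
  ultimately have "comb_seq n u u' \<in> {u. \<forall>i<Suc r. jump_chain lam mu x u (\<Sum>i'\<le>i. d i') = ks i} \<longleftrightarrow>
      u \<in> A \<and> u' \<in> {u. jump_chain lam mu (ks (r - 1)) u (d r) = ks r}" for u u'
    by auto
  then show ?thesis
    unfolding n_def[symmetric] A_def[symmetric] by (auto simp: space_pair_measure)
qed

lemma emeasure_jump_chain_partial_sums:
  fixes r :: nat and d ks :: "nat \<Rightarrow> nat"
  assumes "lam > 0" "mu > 0"
  shows "emeasure uniform_seq {u. \<forall>i<r. jump_chain lam mu x u (\<Sum>i'\<le>i. d i') = ks i} =
    ennreal (\<Prod>i<r. ucat_kernel_pow lam mu (d i) (if i = 0 then x else ks (i - 1)) (ks i))"
proof (induction r)
  case 0
  then show ?case using prob_space.emeasure_space_1[OF prob_space_uniform_seq] by simp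
next
  case (Suc r)
  show ?case
  proof (cases "r = 0")
    case True
    then show ?thesis using emeasure_jump_chain[OF assms, of x "d 0" "ks 0"] by simp
  next
    case False
    have "{u. jump_chain lam mu (ks (r - 1)) u (d r) = ks r} \<in> sets uniform_seq"
      using measurable_sets[OF jump_chain_measurable, of "{ks r}"] by (simp add: vimage_def)
    then have "emeasure uniform_seq {u. \<forall>i<Suc r. jump_chain lam mu x u (\<Sum>i'\<le>i. d i') = ks i} =
        emeasure uniform_seq {u. \<forall>i<r. jump_chain lam mu x u (\<Sum>i'\<le>i. d i') = ks i} *
        emeasure uniform_seq {u. jump_chain lam mu (ks (r - 1)) u (d r) = ks r}"
      using False
      by (intro emeasure_uniform_seq_comb_seq[OF sets_jump_chain_event _ sets_jump_chain_event
            comb_seq_jump_chain_event]) auto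
    then show ?thesis
      using Suc.IH emeasure_jump_chain[OF assms] False
      by (simp add: ennreal_mult[symmetric] ucat_kernel_pow_nonneg[OF assms] prod_nonneg)
  qed
qed

section \<open>Poisson weights\<close>

definition poisson_weight :: "real \<Rightarrow> nat \<Rightarrow> real" where
  "poisson_weight a k = exp (- a) * a ^ k / fact k"

lemma poisson_weight_nonneg: "0 \<le> a \<Longrightarrow> 0 \<le> poisson_weight a k"
  by (simp add: poisson_weight_def)

lemma poisson_weight_sums: "0 \<le> a \<Longrightarrow> poisson_weight a sums 1"
proof -
  have "(\<lambda>n. a ^ n / fact n) sums exp a"
    using exp_converges[of a] by (simp add: divide_inverse mult.commute)
  then have "(\<lambda>n. exp (- a) * (a ^ n / fact n)) sums (exp (- a) * exp a)"
    by (rule sums_mult)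
  moreover have "poisson_weight a = (\<lambda>n. exp (- a) * (a ^ n / fact n))"
    by (simp add: poisson_weight_def fun_eq_iff)
  ultimately show ?thesis by (simp add: exp_minus)
qed

lemma poisson_weight_abs_summable: "0 \<le> a \<Longrightarrow> Infinite_Set_Sum.abs_summable_on (poisson_weight a) UNIV"
  using poisson_weight_sums[of a] poisson_weight_nonneg[of a]
  by (simp add: abs_summable_on_nat_iff' sums_summable)

lemma suminf_ennreal_poisson_weight: "0 \<le> a \<Longrightarrow> (\<Sum>k. ennreal (poisson_weight a k)) = 1"
  using poisson_weight_sums[of a]
  by (simp add: suminf_ennreal2 poisson_weight_nonneg sums_summable sums_unique[symmetric])

lemma poisson_weight_convolution:
  assumes "0 \<le> a" "0 \<le> b"
  shows "(\<Sum>k\<le>n. poisson_weight a k * poisson_weight b (n - k)) = poisson_weight (a + b) n"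
proof -
  have "(\<Sum>k\<le>n. poisson_weight a k * poisson_weight b (n - k)) =
      (\<Sum>k\<le>n. exp (-(a+b)) / fact n * (real (n choose k) * a ^ k * b ^ (n - k)))"
  proof (intro sum.cong refl)
    fix k assume "k \<in> {..n}"
    then have "real (n choose k) = fact n / (fact k * fact (n - k))"
      by (simp add: binomial_fact)
    moreover have "exp (-(a+b)) = exp (-a) * exp (-b)" by (simp add: exp_add[symmetric])
    ultimately show "poisson_weight a k * poisson_weight b (n - k) =
        exp (-(a+b)) / fact n * (real (n choose k) * a ^ k * b ^ (n - k))"
      by (simp add: poisson_weight_def)
  qed
  also have "\<dots> = exp (-(a+b)) / fact n * (\<Sum>k\<le>n. real (n choose k) * a ^ k * b ^ (n - k))"
    by (simp add: sum_distrib_left)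
  also have "\<dots> = poisson_weight (a + b) n"
    by (simp add: poisson_weight_def binomial_ring add.commute)
  finally show ?thesis .
qed

lemma sum_PiE_Suc:
  fixes F :: "(nat \<Rightarrow> 'b) \<Rightarrow> 'c::comm_monoid_add"
  assumes "finite S"
  shows "(\<Sum>f\<in>PiE {..<Suc n} (\<lambda>_. S). F f) = (\<Sum>y\<in>S. \<Sum>g\<in>PiE {..<n} (\<lambda>_. S). F (g(n := y)))"
proof -
  have eq: "PiE {..<Suc n} (\<lambda>_. S) = (\<lambda>(y, g). g(n := y)) ` (S \<times> PiE {..<n} (\<lambda>_. S))"
    using PiE_insert_eq[of n "{..<n}" "\<lambda>_. S"] by (simp add: lessThan_Suc)
  have inj: "inj_on (\<lambda>(y, g). g(n := y)) (S \<times> PiE {..<n} (\<lambda>_. S))"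
    using inj_combinator[of n "{..<n}" "\<lambda>_. S"] by simp
  show ?thesis
    unfolding eq sum.reindex[OF inj] sum.cartesian_product by (simp add: case_prod_unfold)
qed

lemma poisson_weight_sum_PiE:
  fixes x :: "nat \<Rightarrow> real" and B N n :: nat
  assumes "\<And>m. 0 \<le> x m" "n \<le> N"
  shows "(\<Sum>v\<in>PiE {..<B} (\<lambda>_. {..N}). if (\<Sum>m<B. v m) = n then \<Prod>m<B. poisson_weight (x m) (v m) else 0) =
    poisson_weight (\<Sum>m<B. x m) n"
  using assms(2)
proof (induction B arbitrary: n)
  case 0
  then show ?case by (cases "n = 0") (auto simp: poisson_weight_def PiE_empty_domain)
next
  case (Suc B)
  let ?conv = "\<lambda>n. \<Sum>v\<in>PiE {..<B} (\<lambda>_. {..N}).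
    if (\<Sum>m<B. v m) = n then \<Prod>m<B. poisson_weight (x m) (v m) else 0"
  have "(\<Sum>v\<in>PiE {..<Suc B} (\<lambda>_. {..N}).
      if (\<Sum>m<Suc B. v m) = n then \<Prod>m<Suc B. poisson_weight (x m) (v m) else 0) =
      (\<Sum>y\<le>N. \<Sum>g\<in>PiE {..<B} (\<lambda>_. {..N}).
        if y \<le> n then poisson_weight (x B) y *
          (if (\<Sum>m<B. g m) = n - y then \<Prod>m<B. poisson_weight (x m) (g m) else 0) else 0)"
    unfolding sum_PiE_Suc[OF finite_atMost]
  proof (intro sum.cong refl)
    fix y :: nat and g :: "nat \<Rightarrow> nat"
    have "(\<Sum>m<Suc B. (g(B := y)) m) = (\<Sum>m<B. g m) + y"
      by (simp add: sum.cong[of "{..<B}" "{..<B}" "\<lambda>m. (g(B := y)) m" g])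
    moreover have "(\<Prod>m<Suc B. poisson_weight (x m) ((g(B := y)) m)) =
        poisson_weight (x B) y * (\<Prod>m<B. poisson_weight (x m) (g m))"
      by (simp add: prod.cong[of "{..<B}" "{..<B}" "\<lambda>m. poisson_weight (x m) ((g(B := y)) m)"])
    ultimately show "(if (\<Sum>m<Suc B. (g(B := y)) m) = n
          then \<Prod>m<Suc B. poisson_weight (x m) ((g(B := y)) m) else 0) =
        (if y \<le> n then poisson_weight (x B) y *
          (if (\<Sum>m<B. g m) = n - y then \<Prod>m<B. poisson_weight (x m) (g m) else 0) else 0)"
      by auto
  qed
  also have "\<dots> = (\<Sum>y\<le>N. if y \<le> n then poisson_weight (x B) y * ?conv (n - y) else 0)"
    by (intro sum.cong refl) (auto simp: sum_distrib_left)
  also have "\<dots> = (\<Sum>y\<le>n. poisson_weight (x B) y * poisson_weight (\<Sum>m<B. x m) (n - y))"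
    using Suc by (intro sum.mono_neutral_cong_right) auto
  also have "\<dots> = poisson_weight (\<Sum>m<Suc B. x m) n"
    using poisson_weight_convolution[of "x B" "\<Sum>m<B. x m" n] assms(1)
    by (simp add: sum_nonneg add.commute)
  finally show ?case .
qed

definition multinomial_sum :: "nat \<Rightarrow> (nat \<Rightarrow> real) \<Rightarrow> nat \<Rightarrow> (nat \<Rightarrow> nat) \<Rightarrow> real" where
  "multinomial_sum r l n c = (\<Sum>f\<in>PiE {..<n} (\<lambda>_. {..r}).
     if (\<forall>i\<le>r. card {j. j < n \<and> f j = i} = c i) then \<Prod>j<n. l (f j) else 0)"

lemma card_fun_upd_Suc:
  "card {j. j < Suc n \<and> (g(n := y)) j = i} = card {j. j < n \<and> g j = i} + (if y = i then 1 else 0)"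
proof -
  have "{j. j < Suc n \<and> (g(n := y)) j = i} = {j. j < n \<and> g j = i} \<union> (if y = i then {n} else {})"
    by (auto simp: less_Suc_eq)
  then show ?thesis by (auto simp: card_insert_if)
qed

lemma multinomial_sum_Suc:
  "multinomial_sum r l (Suc n) c =
    (\<Sum>y\<le>r. l y * (if 1 \<le> c y then multinomial_sum r l n (c(y := c y - 1)) else 0))"
  unfolding multinomial_sum_def sum_PiE_Suc[OF finite_atMost]
proof (intro sum.cong refl)
  fix y assume y: "y \<in> {..r}"
  have "(\<Sum>g\<in>PiE {..<n} (\<lambda>_. {..r}). if \<forall>i\<le>r. card {j. j < Suc n \<and> (g(n := y)) j = i} = c i
        then \<Prod>j<Suc n. l ((g(n := y)) j) else 0) =
      (\<Sum>g\<in>PiE {..<n} (\<lambda>_. {..r}). l y * (if 1 \<le> c y then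
        (if \<forall>i\<le>r. card {j. j < n \<and> g j = i} = (c(y := c y - 1)) i then \<Prod>j<n. l (g j) else 0) else 0))"
  proof (intro sum.cong refl)
    fix g :: "nat \<Rightarrow> nat"
    have "(\<Prod>j<Suc n. l ((g(n := y)) j)) = l y * (\<Prod>j<n. l (g j))"
      by (simp add: prod.cong[of "{..<n}" "{..<n}" "\<lambda>j. l ((g(n := y)) j)" "\<lambda>j. l (g j)"])
    moreover have "(\<forall>i\<le>r. card {j. j < Suc n \<and> (g(n := y)) j = i} = c i) \<longleftrightarrow>
        1 \<le> c y \<and> (\<forall>i\<le>r. card {j. j < n \<and> g j = i} = (c(y := c y - 1)) i)"
      using y unfolding card_fun_upd_Suc by (auto split: if_splits)
    ultimately show "(if \<forall>i\<le>r. card {j. j < Suc n \<and> (g(n := y)) j = i} = c i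
        then \<Prod>j<Suc n. l ((g(n := y)) j) else 0) =
      l y * (if 1 \<le> c y then
        (if \<forall>i\<le>r. card {j. j < n \<and> g j = i} = (c(y := c y - 1)) i then \<Prod>j<n. l (g j) else 0) else 0)"
      by auto
  qed
  then show "(\<Sum>g\<in>PiE {..<n} (\<lambda>_. {..r}). if \<forall>i\<le>r. card {j. j < Suc n \<and> (g(n := y)) j = i} = c i
        then \<Prod>j<Suc n. l ((g(n := y)) j) else 0) =
      l y * (if 1 \<le> c y then \<Sum>g\<in>PiE {..<n} (\<lambda>_. {..r}).
        if \<forall>i\<le>r. card {j. j < n \<and> g j = i} = (c(y := c y - 1)) i then \<Prod>j<n. l (g j) else 0 else 0)"
    by (simp add: sum_distrib_left)
qed

lemma prod_power_fact_decrement: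
  fixes l :: "nat \<Rightarrow> real"
  assumes "y \<le> r" "1 \<le> c y"
  shows "l y * (\<Prod>i\<le>r. l i ^ (c(y := c y - 1)) i / fact ((c(y := c y - 1)) i)) =
    real (c y) * (\<Prod>i\<le>r. l i ^ c i / fact (c i))"
proof -
  obtain k where k: "c y = Suc k" using assms(2) by (cases "c y") auto
  have "(\<Prod>i\<le>r. l i ^ (c(y := c y - 1)) i / fact ((c(y := c y - 1)) i)) =
      (l y ^ k / fact k) * (\<Prod>i\<in>{..r} - {y}. l i ^ c i / fact (c i))"
    using assms(1) k by (subst prod.remove[of _ y]) auto
  moreover have "(\<Prod>i\<le>r. l i ^ c i / fact (c i)) =
      (l y ^ Suc k / fact (Suc k)) * (\<Prod>i\<in>{..r} - {y}. l i ^ c i / fact (c i))"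
    using assms(1) k by (subst prod.remove[of _ y]) auto
  moreover have "l y * (l y ^ k / fact k) = real (Suc k) * (l y ^ Suc k / fact (Suc k))"
    by (simp add: field_simps del: of_nat_Suc)
  ultimately show ?thesis using k by (simp add: mult.assoc[symmetric])
qed

theorem multinomial_sum_eq:
  assumes "(\<Sum>i\<le>r. c i) = n"
  shows "multinomial_sum r l n c = fact n * (\<Prod>i\<le>r. l i ^ c i / fact (c i))"
  using assms
proof (induction n arbitrary: c)
  case 0
  then show ?case by (simp add: multinomial_sum_def PiE_empty_domain)
next
  case (Suc n)
  have "multinomial_sum r l (Suc n) c = (\<Sum>y\<le>r. fact n * (real (c y) * (\<Prod>i\<le>r. l i ^ c i / fact (c i))))"
    unfolding multinomial_sum_Suc
  proof (intro sum.cong refl)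
    fix y assume y: "y \<in> {..r}"
    show "l y * (if 1 \<le> c y then multinomial_sum r l n (c(y := c y - 1)) else 0) =
        fact n * (real (c y) * (\<Prod>i\<le>r. l i ^ c i / fact (c i)))"
    proof (cases "1 \<le> c y")
      case True
      have "(\<Sum>i\<le>r. (c(y := c y - 1)) i) = n"
        using Suc.prems True y by (simp add: sum.remove[of _ y])
      then show ?thesis
        using Suc.IH prod_power_fact_decrement[of y r c l] y True by (simp add: algebra_simps)
    qed simp
  qed
  also have "\<dots> = fact n * real (\<Sum>y\<le>r. c y) * (\<Prod>i\<le>r. l i ^ c i / fact (c i))"
    by (simp add: sum_distrib_left sum_distrib_right algebra_simps)
  also have "\<dots> = fact (Suc n) * (\<Prod>i\<le>r. l i ^ c i / fact (c i))"
    using Suc.prems by (simp add: algebra_simps)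
  finally show ?case .
qed

lemma poisson_weight_split:
  fixes r :: nat
  assumes "(\<Sum>i\<le>r. l i) = 1" "n = (\<Sum>i\<le>r. c i)"
  shows "poisson_weight a n * (fact n * (\<Prod>i\<le>r. l i ^ c i / fact (c i))) =
    (\<Prod>i\<le>r. poisson_weight (a * l i) (c i))"
proof -
  have "(\<Prod>i\<le>r. poisson_weight (a * l i) (c i)) =
      (\<Prod>i\<le>r. exp (- (a * l i))) * (\<Prod>i\<le>r. a ^ c i) * (\<Prod>i\<le>r. l i ^ c i / fact (c i))"
    by (simp add: poisson_weight_def prod.distrib[symmetric] power_mult_distrib mult.assoc)
  also have "(\<Prod>i\<le>r. exp (- (a * l i))) = exp (- a)"
    using assms(1) by (simp add: exp_sum[symmetric] sum_negf sum_distrib_left[symmetric])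
  also have "(\<Prod>i\<le>r. a ^ c i) = a ^ n"
    by (simp add: assms(2) power_sum)
  finally show ?thesis by (simp add: poisson_weight_def)
qed

section \<open>A Poisson clock built from unit blocks\<close>

lemma lift_Suc_mono_le_prefix:
  fixes f :: "nat \<Rightarrow> 'a::order"
  assumes "\<And>i. Suc i < r \<Longrightarrow> f i \<le> f (Suc i)" "i \<le> j" "j < r"
  shows "f i \<le> f j"
  using assms(2,3)
proof (induction j)
  case (Suc j)
  then show ?case using assms(1)[of j] by (cases "i = Suc j") (auto intro: order_trans)
qed simp

definition poisson_real :: "real \<Rightarrow> real measure" where
  "poisson_real a = distr (measure_pmf (poisson_pmf a)) borel real"

text \<open>One unit block of the clock: coordinate \<open>0\<close> carries the number of marks, a Poisson variable
  embedded into the reals, and coordinates \<open>1, 2, \<dots>\<close> the uniform positions of the marks.\<close>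

definition block_measure :: "real \<Rightarrow> (nat \<Rightarrow> real) measure" where
  "block_measure a = PiM UNIV (\<lambda>j. if j = 0 then poisson_real a else uniform01)"

definition block_size :: "(nat \<Rightarrow> real) \<Rightarrow> nat" where
  "block_size \<beta> = nat \<lfloor>\<beta> 0\<rfloor>"

definition clip01 :: "real \<Rightarrow> real" where
  "clip01 x = max 0 (min 1 x)"

text \<open>For a nondecreasing \<open>s\<close>, the cells \<open>0, \<dots>, r\<close> are \<open>(-\<infinity>, s 0], (s 0, s 1], \<dots>, (s (r - 1), \<infinity>)\<close>.\<close>

definition cell_of :: "nat \<Rightarrow> (nat \<Rightarrow> real) \<Rightarrow> real \<Rightarrow> nat" where
  "cell_of r s v = (LEAST i. i = r \<or> to_unit_open v \<le> s i)"

definition cell_count :: "nat \<Rightarrow> (nat \<Rightarrow> real) \<Rightarrow> nat \<Rightarrow> (nat \<Rightarrow> real) \<Rightarrow> nat" where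
  "cell_count r s i \<beta> = card {j. j < block_size \<beta> \<and> cell_of r s (\<beta> (Suc j)) = i}"

definition cell_length :: "nat \<Rightarrow> (nat \<Rightarrow> real) \<Rightarrow> nat \<Rightarrow> real" where
  "cell_length r s i = (if i = r then 1 else clip01 (s i)) - (if i = 0 then 0 else clip01 (s (i - 1)))"

lemma sets_poisson_real [simp, measurable_cong]: "sets (poisson_real a) = sets borel"
  by (simp add: poisson_real_def)

lemma prob_space_poisson_real: "a > 0 \<Longrightarrow> prob_space (poisson_real a)"
  unfolding poisson_real_def by (intro prob_space.prob_space_distr measure_pmf.prob_space_axioms) auto

lemma emeasure_poisson_real_floor:
  assumes "a > 0"
  shows "emeasure (poisson_real a) {x. nat \<lfloor>x\<rfloor> = n} = ennreal (poisson_weight a n)"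
proof -
  have "emeasure (poisson_real a) {x. nat \<lfloor>x\<rfloor> = n} =
      emeasure (measure_pmf (poisson_pmf a)) (real -` {x. nat \<lfloor>x\<rfloor> = n})"
    unfolding poisson_real_def by (subst emeasure_distr) auto
  also have "real -` {x. nat \<lfloor>x\<rfloor> = n} = {n}" by auto
  finally show ?thesis
    using assms by (simp add: emeasure_pmf_single poisson_weight_def field_simps)
qed

lemma cell_of_measurable [measurable]: "cell_of r s \<in> measurable borel (count_space UNIV)"
  unfolding cell_of_def by measurable

lemma cell_of_le: "cell_of r s v \<le> r"
  unfolding cell_of_def by (rule Least_le) simp

lemma cell_of_eq_iff:
  assumes mono: "\<And>i. Suc i < r \<Longrightarrow> s i \<le> s (Suc i)" and "i \<le> r"
  shows "cell_of r s v = i \<longleftrightarrow>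
    (i = r \<or> to_unit_open v \<le> s i) \<and> (i = 0 \<or> \<not> to_unit_open v \<le> s (i - 1))"
proof
  assume "cell_of r s v = i"
  moreover have "cell_of r s v = r \<or> to_unit_open v \<le> s (cell_of r s v)"
    unfolding cell_of_def by (rule LeastI[of _ r]) simp
  moreover have "\<not> (j = r \<or> to_unit_open v \<le> s j)" if "j < cell_of r s v" for j
    using not_less_Least[OF that[unfolded cell_of_def]] by simp
  ultimately show "(i = r \<or> to_unit_open v \<le> s i) \<and> (i = 0 \<or> \<not> to_unit_open v \<le> s (i - 1))"
    by (cases i) auto
next
  assume i: "(i = r \<or> to_unit_open v \<le> s i) \<and> (i = 0 \<or> \<not> to_unit_open v \<le> s (i - 1))"
  have "i \<le> j" if "j = r \<or> to_unit_open v \<le> s j" for j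
  proof (rule ccontr)
    assume "\<not> i \<le> j"
    then have ji: "j < i" by simp
    then have "s j \<le> s (i - 1)"
      using assms(2) by (intro lift_Suc_mono_le_prefix[where f = s, OF mono]) auto
    then show False using i that ji assms(2) by auto
  qed
  then show "cell_of r s v = i"
    unfolding cell_of_def using i by (intro Least_equality) auto
qed

lemma cell_of_le_iff:
  assumes mono: "\<And>i. Suc i < r \<Longrightarrow> s i \<le> s (Suc i)" and "i < r"
  shows "cell_of r s v \<le> i \<longleftrightarrow> to_unit_open v \<le> s i"
proof
  assume le: "cell_of r s v \<le> i"
  have "cell_of r s v = r \<or> to_unit_open v \<le> s (cell_of r s v)"
    unfolding cell_of_def by (rule LeastI[of _ r]) simp
  then have "to_unit_open v \<le> s (cell_of r s v)" using le assms(2) by auto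
  also have "s (cell_of r s v) \<le> s i"
    using le assms(2) by (intro lift_Suc_mono_le_prefix[where f = s, OF mono]) auto
  finally show "to_unit_open v \<le> s i" .
qed (auto simp: cell_of_def intro: Least_le)

lemma emeasure_lborel_unit_Ioc:
  "emeasure lborel ({0<..<1} \<inter> {a<..b}) = ennreal (max 0 (clip01 b - clip01 a))"
proof -
  have null: "{0<..<1} \<inter> {a<..b} \<inter> {b} \<in> null_sets lborel"
    by (rule null_sets_subset[of "{b}"]) auto
  have decomp: "{0<..<1} \<inter> {a<..b} = {max 0 a<..<min 1 b} \<union> ({0<..<1} \<inter> {a<..b} \<inter> {b})"
    by auto
  have eq: "emeasure lborel ({0<..<1} \<inter> {a<..b}) = emeasure lborel {max 0 a<..<min 1 b}"
    by (subst decomp) (rule emeasure_Un_null_set[OF _ null], simp)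
  show ?thesis
  proof (cases "max 0 a \<le> min 1 b")
    case True
    then have "clip01 b - clip01 a = min 1 b - max 0 a" by (auto simp: clip01_def)
    with True show ?thesis by (simp add: eq)
  next
    case False
    then have "{max 0 a<..<min 1 b} = {}" "clip01 b \<le> clip01 a" by (auto simp: clip01_def)
    then show ?thesis by (simp add: eq)
  qed
qed

lemma cell_length_nonneg:
  assumes mono: "\<And>i. Suc i < r \<Longrightarrow> s i \<le> s (Suc i)" and "i \<le> r"
  shows "0 \<le> cell_length r s i"
  using mono[of "i - 1"] assms(2) by (auto simp: cell_length_def clip01_def)

lemma emeasure_cell_of:
  assumes mono: "\<And>i. Suc i < r \<Longrightarrow> s i \<le> s (Suc i)" and "i \<le> r"
  shows "emeasure uniform01 {v. cell_of r s v = i} = ennreal (cell_length r s i)"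
proof -
  define a where "a = (if i = 0 then 0 else s (i - 1))"
  define b where "b = (if i = r then 1 else s i)"
  have "{0<..<1} \<inter> {v. cell_of r s v = i} = {0<..<1} \<inter> {a<..b}"
    using cell_of_eq_iff[where r = r and s = s, OF mono assms(2)] by (auto simp: a_def b_def to_unit_open_def)
  then have "emeasure uniform01 {v. cell_of r s v = i} = ennreal (max 0 (clip01 b - clip01 a))"
    by (simp add: emeasure_uniform01 emeasure_lborel_unit_Ioc)
  also have "clip01 b - clip01 a = cell_length r s i"
    by (simp add: cell_length_def a_def b_def clip01_def)
  finally show ?thesis
    using cell_length_nonneg[where r = r and s = s, OF mono assms(2)] by simp
qed

lemma sum_cell_length: "(\<Sum>i\<le>r. cell_length r s i) = 1"
proof -
  define e where "e i = (if i = 0 then 0 else if i = Suc r then 1 else clip01 (s (i - 1)))" for i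
  have "(\<Sum>i\<le>r. cell_length r s i) = (\<Sum>i<Suc r. e (Suc i) - e i)"
    by (intro sum.cong) (auto simp: cell_length_def e_def)
  also have "\<dots> = e (Suc r) - e 0"
    by (rule sum_lessThan_telescope)
  also have "\<dots> = 1"
    by (simp add: e_def)
  finally show ?thesis .
qed

lemma product_prob_space_block:
  "a > 0 \<Longrightarrow> product_prob_space (\<lambda>j::nat. if j = 0 then poisson_real a else uniform01)"
  unfolding product_prob_space_def product_prob_space_axioms_def product_sigma_finite_def
  using prob_space_poisson_real prob_space_uniform01 prob_space_imp_sigma_finite by auto

lemma prob_space_block_measure: "a > 0 \<Longrightarrow> prob_space (block_measure a)"
  unfolding block_measure_def
  using prob_space_poisson_real prob_space_uniform01 by (intro prob_space_PiM) auto

lemma sets_block_measure [measurable_cong]: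
  "sets (block_measure a) = sets (PiM UNIV (\<lambda>_::nat. borel :: real measure))"
  unfolding block_measure_def by (rule sets_PiM_cong) auto

lemma space_block_measure [simp]: "space (block_measure a) = UNIV"
  using sets_eq_imp_space_eq[OF sets_block_measure[of a]] by (simp add: space_PiM PiE_UNIV_domain)

lemma block_size_measurable [measurable]: "block_size \<in> measurable (block_measure a) (count_space UNIV)"
  unfolding block_size_def by measurable

lemma cell_count_measurable [measurable]:
  "cell_count r s i \<in> measurable (block_measure a) (count_space UNIV)"
  unfolding cell_count_def block_size_def by measurable

lemma emeasure_block_cells:
  assumes "a > 0" and mono: "\<And>i. Suc i < r \<Longrightarrow> s i \<le> s (Suc i)" and f: "\<And>j. j < n \<Longrightarrow> f j \<le> r"
  shows "emeasure (block_measure a) {\<beta>. block_size \<beta> = n \<and> (\<forall>j<n. cell_of r s (\<beta> (Suc j)) = f j)} =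
    ennreal (poisson_weight a n * (\<Prod>j<n. cell_length r s (f j)))"
proof -
  interpret P: product_prob_space "\<lambda>j::nat. if j = 0 then poisson_real a else uniform01" UNIV
    by (rule product_prob_space_block[OF assms(1)])
  define X where "X j = (if j = 0 then {x. nat \<lfloor>x\<rfloor> = n} else {v. cell_of r s v = f (j - 1)})" for j
  define J where "J = insert 0 (Suc ` {..<n})"
  have "{\<beta>. block_size \<beta> = n \<and> (\<forall>j<n. cell_of r s (\<beta> (Suc j)) = f j)} =
      {\<beta> \<in> space (block_measure a). \<forall>i\<in>J. \<beta> i \<in> X i}"
    by (auto simp: J_def X_def block_size_def)
  also have "emeasure (block_measure a) \<dots> =
      (\<Prod>i\<in>J. emeasure (if i = 0 then poisson_real a else uniform01) (X i))"
    unfolding block_measure_def by (rule P.emeasure_PiM_Collect) (auto simp: X_def J_def)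
  also have "\<dots> = emeasure (poisson_real a) (X 0) * (\<Prod>j<n. emeasure uniform01 (X (Suc j)))"
    by (simp add: J_def prod.reindex)
  also have "\<dots> = ennreal (poisson_weight a n) * (\<Prod>j<n. ennreal (cell_length r s (f j)))"
    using f emeasure_cell_of[where r = r and s = s, OF mono] emeasure_poisson_real_floor[OF assms(1)]
    by (simp add: X_def)
  also have "\<dots> = ennreal (poisson_weight a n * (\<Prod>j<n. cell_length r s (f j)))"
  proof -
    have nonneg: "\<And>j. j \<in> {..<n} \<Longrightarrow> 0 \<le> cell_length r s (f j)"
      using f cell_length_nonneg[where r = r and s = s, OF mono] by blast
    then have "(\<Prod>j<n. ennreal (cell_length r s (f j))) = ennreal (\<Prod>j<n. cell_length r s (f j))"
      by (rule prod_ennreal)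
    moreover have "0 \<le> (\<Prod>j<n. cell_length r s (f j))"
      using nonneg by (rule prod_nonneg)
    ultimately show ?thesis
      using assms(1) by (simp add: ennreal_mult poisson_weight_nonneg)
  qed
  finally show ?thesis .
qed

lemma sum_card_fibres:
  assumes "\<And>j. g j \<le> (r::nat)"
  shows "(\<Sum>i\<le>r. card {j. j < N \<and> g j = i}) = N"
proof -
  have "(\<Sum>i\<le>r. card {j. j < N \<and> g j = i}) = (\<Sum>i\<le>r. \<Sum>j\<in>{j \<in> {..<N}. g j = i}. 1::nat)"
    by simp
  also have "\<dots> = (\<Sum>j<N. 1)"
    by (rule sum.group) (use assms in auto)
  finally show ?thesis by simp
qed

lemma cell_count_event_eq:
  fixes r :: nat
  assumes n: "(\<Sum>i\<le>r. c i) = n"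
  shows "{\<beta>. \<forall>i\<le>r. cell_count r s i \<beta> = c i} =
    (\<Union>f\<in>{f \<in> PiE {..<n} (\<lambda>_. {..r}). \<forall>i\<le>r. card {j. j < n \<and> f j = i} = c i}.
      {\<beta>. block_size \<beta> = n \<and> (\<forall>j<n. cell_of r s (\<beta> (Suc j)) = f j)})"
proof (intro set_eqI iffI)
  fix \<beta> assume \<beta>: "\<beta> \<in> {\<beta>. \<forall>i\<le>r. cell_count r s i \<beta> = c i}"
  have size: "block_size \<beta> = n"
    using \<beta> sum_card_fibres[of "\<lambda>j. cell_of r s (\<beta> (Suc j))" r "block_size \<beta>"] cell_of_le
    by (auto simp: n[symmetric] cell_count_def)
  define f where "f = restrict (\<lambda>j. cell_of r s (\<beta> (Suc j))) {..<n}"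
  have "{j. j < n \<and> f j = i} = {j. j < block_size \<beta> \<and> cell_of r s (\<beta> (Suc j)) = i}" for i
    using size by (auto simp: f_def)
  then have "f \<in> {f \<in> PiE {..<n} (\<lambda>_. {..r}). \<forall>i\<le>r. card {j. j < n \<and> f j = i} = c i}"
    using \<beta> by (auto simp: f_def cell_of_le cell_count_def)
  moreover have "block_size \<beta> = n \<and> (\<forall>j<n. cell_of r s (\<beta> (Suc j)) = f j)"
    using size by (simp add: f_def)
  ultimately show "\<beta> \<in> (\<Union>f\<in>{f \<in> PiE {..<n} (\<lambda>_. {..r}). \<forall>i\<le>r. card {j. j < n \<and> f j = i} = c i}.
      {\<beta>. block_size \<beta> = n \<and> (\<forall>j<n. cell_of r s (\<beta> (Suc j)) = f j)})"
    by blast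
next
  fix \<beta> assume "\<beta> \<in> (\<Union>f\<in>{f \<in> PiE {..<n} (\<lambda>_. {..r}). \<forall>i\<le>r. card {j. j < n \<and> f j = i} = c i}.
      {\<beta>. block_size \<beta> = n \<and> (\<forall>j<n. cell_of r s (\<beta> (Suc j)) = f j)})"
  then obtain f where f: "\<forall>i\<le>r. card {j. j < n \<and> f j = i} = c i"
    and \<beta>: "block_size \<beta> = n" "\<forall>j<n. cell_of r s (\<beta> (Suc j)) = f j"
    by blast
  have "{j. j < block_size \<beta> \<and> cell_of r s (\<beta> (Suc j)) = i} = {j. j < n \<and> f j = i}" for i
    using \<beta> by auto
  then show "\<beta> \<in> {\<beta>. \<forall>i\<le>r. cell_count r s i \<beta> = c i}"
    using f by (simp add: cell_count_def)
qed

theorem emeasure_cell_counts: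
  assumes "a > 0" and mono: "\<And>i. Suc i < r \<Longrightarrow> s i \<le> s (Suc i)"
  shows "emeasure (block_measure a) {\<beta>. \<forall>i\<le>r. cell_count r s i \<beta> = c i} =
    ennreal (\<Prod>i\<le>r. poisson_weight (a * cell_length r s i) (c i))"
proof -
  define n where "n = (\<Sum>i\<le>r. c i)"
  define F where "F = {f \<in> PiE {..<n} (\<lambda>_. {..r}). \<forall>i\<le>r. card {j. j < n \<and> f j = i} = c i}"
  define R where "R f = {\<beta>. block_size \<beta> = n \<and> (\<forall>j<n. cell_of r s (\<beta> (Suc j)) = f j)}" for f
  have FPi: "F \<subseteq> PiE {..<n} (\<lambda>_. {..r})" by (auto simp: F_def)
  have F: "finite F" "\<And>f j. f \<in> F \<Longrightarrow> j < n \<Longrightarrow> f j \<le> r"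
    using finite_subset[OF FPi] FPi by (auto simp: finite_PiE PiE_iff)
  have "R f \<in> sets (block_measure a)" for f
  proof -
    have "{\<beta> \<in> space (block_measure a). block_size \<beta> = n \<and> (\<forall>j<n. cell_of r s (\<beta> (Suc j)) = f j)}
        \<in> sets (block_measure a)"
      unfolding block_size_def by measurable
    then show ?thesis by (simp add: R_def)
  qed
  moreover have "disjoint_family_on R F"
    unfolding disjoint_family_on_def
  proof (intro ballI impI)
    fix f g assume fg: "f \<in> F" "g \<in> F" "f \<noteq> g"
    then obtain j where j: "f j \<noteq> g j" by blast
    then have "j < n" using fg by (auto simp: F_def PiE_def extensional_def)
    then show "R f \<inter> R g = {}" using j by (auto simp: R_def)
  qed
  ultimately have "emeasure (block_measure a) {\<beta>. \<forall>i\<le>r. cell_count r s i \<beta> = c i} =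
      (\<Sum>f\<in>F. emeasure (block_measure a) (R f))"
    unfolding cell_count_event_eq[OF n_def[symmetric]] F_def[symmetric] R_def
    by (intro sum_emeasure[symmetric] F) auto
  also have "\<dots> = ennreal (\<Sum>f\<in>F. poisson_weight a n * (\<Prod>j<n. cell_length r s (f j)))"
    using F assms(1) cell_length_nonneg[where r = r and s = s, OF mono]
    by (subst sum_ennreal[symmetric])
      (auto simp: R_def emeasure_block_cells[where r = r and s = s, OF assms] intro!: sum.cong mult_nonneg_nonneg
        prod_nonneg poisson_weight_nonneg)
  also have "(\<Sum>f\<in>F. poisson_weight a n * (\<Prod>j<n. cell_length r s (f j))) =
      poisson_weight a n * multinomial_sum r (cell_length r s) n c"
    unfolding multinomial_sum_def F_def sum_distrib_left[symmetric]
    by (rule arg_cong[where f = "(*) _"], rule sum.inter_filter) (auto intro: finite_PiE)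
  also have "\<dots> = (\<Prod>i\<le>r. poisson_weight (a * cell_length r s i) (c i))"
    by (simp add: multinomial_sum_eq n_def poisson_weight_split sum_cell_length)
  finally show ?thesis .
qed

definition marks_below :: "real \<Rightarrow> (nat \<Rightarrow> real) \<Rightarrow> nat" where
  "marks_below s \<beta> = card {j. j < block_size \<beta> \<and> to_unit_open (\<beta> (Suc j)) \<le> s}"

text \<open>Block \<open>m\<close> places its marks in the time interval \<open>(m, m + 1)\<close>.\<close>

definition poisson_clock :: "real \<Rightarrow> (nat \<Rightarrow> nat \<Rightarrow> real) \<Rightarrow> nat" where
  "poisson_clock t b = (\<Sum>m<nat \<lceil>t\<rceil>. marks_below (t - real m) (b m))"

abbreviation clock_space :: "real \<Rightarrow> (nat \<Rightarrow> nat \<Rightarrow> real) measure" where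
  "clock_space a \<equiv> PiM UNIV (\<lambda>_::nat. block_measure a)"

text \<open>The number of marks of the first \<open>B\<close> blocks falling into the \<open>i\<close>-th of the time cells
  \<open>[0, t 0], (t 0, t 1], \<dots>, (t (r - 1), B]\<close>.\<close>

definition increment_count :: "nat \<Rightarrow> (nat \<Rightarrow> real) \<Rightarrow> nat \<Rightarrow> nat \<Rightarrow> (nat \<Rightarrow> nat \<Rightarrow> real) \<Rightarrow> nat" where
  "increment_count r t B i b = (\<Sum>m<B. cell_count r (\<lambda>j. t j - real m) i (b m))"

lemma marks_below_measurable [measurable]: "marks_below s \<in> measurable (block_measure a) (count_space UNIV)"
  unfolding marks_below_def block_size_def by measurable

lemma poisson_clock_measurable [measurable]:
  "poisson_clock t \<in> measurable (clock_space a) (count_space UNIV)"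
  unfolding poisson_clock_def by measurable

lemma increment_count_measurable [measurable]:
  "increment_count r t B i \<in> measurable (clock_space a) (count_space UNIV)"
  unfolding increment_count_def by measurable

lemma marks_below_mono: "s \<le> s' \<Longrightarrow> marks_below s \<beta> \<le> marks_below s' \<beta>"
  unfolding marks_below_def by (rule card_mono) auto

lemma marks_below_nonpos:
  assumes "s \<le> 0"
  shows "marks_below s \<beta> = 0"
proof -
  have "\<not> to_unit_open v \<le> s" for v
    using to_unit_open_bounds(1)[of v] assms by linarith
  then show ?thesis by (simp add: marks_below_def)
qed

lemma poisson_clock_mono: "s \<le> t \<Longrightarrow> poisson_clock s b \<le> poisson_clock t b"
proof -
  assume "s \<le> t"
  then have "(\<Sum>m<nat \<lceil>s\<rceil>. marks_below (s - real m) (b m)) \<le> (\<Sum>m<nat \<lceil>s\<rceil>. marks_below (t - real m) (b m))"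
    by (intro sum_mono marks_below_mono) auto
  also have "\<dots> \<le> (\<Sum>m<nat \<lceil>t\<rceil>. marks_below (t - real m) (b m))"
    using nat_mono[OF ceiling_mono[OF \<open>s \<le> t\<close>]] by (intro sum_mono2) auto
  finally show ?thesis by (simp add: poisson_clock_def)
qed

lemma poisson_clock_eq_sum_blocks:
  assumes "t \<le> real B"
  shows "poisson_clock t b = (\<Sum>m<B. marks_below (t - real m) (b m))"
  unfolding poisson_clock_def
proof (rule sum.mono_neutral_left)
  show "{..<nat \<lceil>t\<rceil>} \<subseteq> {..<B}"
    using assms by (auto simp: nat_less_iff ceiling_le_iff)
qed (auto intro!: marks_below_nonpos)

lemma marks_below_eq_sum_cell_count:
  assumes mono: "\<And>i. Suc i < r \<Longrightarrow> s i \<le> s (Suc i)" and "i < r"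
  shows "marks_below (s i) \<beta> = (\<Sum>i'\<le>i. cell_count r s i' \<beta>)"
proof -
  have "marks_below (s i) \<beta> = (\<Sum>j\<in>{j \<in> {..<block_size \<beta>}. cell_of r s (\<beta> (Suc j)) \<le> i}. 1)"
    unfolding marks_below_def using cell_of_le_iff[where r = r and s = s, OF mono assms(2)] by simp
  also have "\<dots> = (\<Sum>i'\<le>i. \<Sum>j\<in>{j \<in> {j \<in> {..<block_size \<beta>}. cell_of r s (\<beta> (Suc j)) \<le> i}.
      cell_of r s (\<beta> (Suc j)) = i'}. 1)"
    by (rule sum.group[symmetric]) auto
  also have "\<dots> = (\<Sum>i'\<le>i. cell_count r s i' \<beta>)"
    by (intro sum.cong refl) (auto simp: cell_count_def intro!: arg_cong[where f = card])
  finally show ?thesis .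
qed

lemma poisson_clock_eq_sum_increments:
  assumes mono: "\<And>i. Suc i < r \<Longrightarrow> t i \<le> t (Suc i)" and "i < r" and "t (r - 1) \<le> real B"
  shows "poisson_clock (t i) b = (\<Sum>i'\<le>i. increment_count r t B i' b)"
proof -
  have "t i \<le> t (r - 1)"
    using assms(2) by (intro lift_Suc_mono_le_prefix[where f = t, OF mono]) auto
  then have "t i \<le> real B"
    using assms(3) by linarith
  then have "poisson_clock (t i) b = (\<Sum>m<B. marks_below (t i - real m) (b m))"
    by (rule poisson_clock_eq_sum_blocks)
  also have "\<dots> = (\<Sum>m<B. \<Sum>i'\<le>i. cell_count r (\<lambda>j. t j - real m) i' (b m))"
    using marks_below_eq_sum_cell_count[of r "\<lambda>j. t j - real m" for m] mono assms(2) by simp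
  also have "\<dots> = (\<Sum>i'\<le>i. increment_count r t B i' b)"
    unfolding increment_count_def by (rule sum.swap)
  finally show ?thesis .
qed

lemma product_prob_space_clock: "a > 0 \<Longrightarrow> product_prob_space (\<lambda>_::nat. block_measure a)"
  unfolding product_prob_space_def product_prob_space_axioms_def product_sigma_finite_def
  using prob_space_block_measure prob_space_imp_sigma_finite by blast

lemma prob_space_clock_space: "a > 0 \<Longrightarrow> prob_space (clock_space a)"
  by (intro prob_space_PiM prob_space_block_measure)

lemma space_clock_space [simp]: "space (clock_space a) = UNIV"
  by (simp add: space_PiM PiE_UNIV_domain)

lemma emeasure_cell_count_matrix:
  assumes "a > 0" and mono: "\<And>i. Suc i < r \<Longrightarrow> t i \<le> t (Suc i)"
  shows "emeasure (clock_space a) {b. \<forall>m<B. \<forall>i\<le>r. cell_count r (\<lambda>j. t j - real m) i (b m) = C i m} =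
    ennreal (\<Prod>m<B. \<Prod>i\<le>r. poisson_weight (a * cell_length r (\<lambda>j. t j - real m) i) (C i m))"
proof -
  interpret P: product_prob_space "\<lambda>_::nat. block_measure a" UNIV
    by (rule product_prob_space_clock[OF assms(1)])
  define X where "X m = {\<beta>. \<forall>i\<le>r. cell_count r (\<lambda>j. t j - real m) i \<beta> = C i m}" for m
  have "X m \<in> sets (block_measure a)" for m
  proof -
    have "{\<beta> \<in> space (block_measure a). \<forall>i\<le>r. cell_count r (\<lambda>j. t j - real m) i \<beta> = C i m}
        \<in> sets (block_measure a)"
      by measurable
    then show ?thesis by (simp add: X_def)
  qed
  then have "emeasure (clock_space a) {b \<in> space (clock_space a). \<forall>m\<in>{..<B}. b m \<in> X m} =
      (\<Prod>m<B. emeasure (block_measure a) (X m))"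
    by (intro P.emeasure_PiM_Collect) auto
  also have "\<dots> = (\<Prod>m<B. ennreal (\<Prod>i\<le>r. poisson_weight (a * cell_length r (\<lambda>j. t j - real m) i) (C i m)))"
    unfolding X_def using mono by (intro prod.cong refl emeasure_cell_counts[OF assms(1)]) auto
  also have "\<dots> = ennreal (\<Prod>m<B. \<Prod>i\<le>r. poisson_weight (a * cell_length r (\<lambda>j. t j - real m) i) (C i m))"
    using assms cell_length_nonneg[of r "\<lambda>j. t j - real m" for m]
    by (intro prod_ennreal) (auto intro!: prod_nonneg poisson_weight_nonneg)
  finally show ?thesis by (simp add: X_def Ball_def)
qed

lemma increment_count_event_eq:
  "{b. \<forall>i\<le>r. increment_count r t B i b = d i} =
    (\<Union>C\<in>PiE {..r} (\<lambda>i. {v \<in> PiE {..<B} (\<lambda>_. {..d i}). (\<Sum>m<B. v m) = d i}).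
      {b. \<forall>m<B. \<forall>i\<le>r. cell_count r (\<lambda>j. t j - real m) i (b m) = C i m})"
proof (intro set_eqI iffI)
  fix b assume b: "b \<in> {b. \<forall>i\<le>r. increment_count r t B i b = d i}"
  define C where "C = (\<lambda>i\<in>{..r}. \<lambda>m\<in>{..<B}. cell_count r (\<lambda>j. t j - real m) i (b m))"
  have "C \<in> PiE {..r} (\<lambda>i. {v \<in> PiE {..<B} (\<lambda>_. {..d i}). (\<Sum>m<B. v m) = d i})"
  proof (rule PiE_I)
    fix i assume i: "i \<in> {..r}"
    have sum: "(\<Sum>m<B. C i m) = d i"
      using b i by (simp add: C_def increment_count_def)
    then have "C i m \<le> d i" if "m < B" for m
      using member_le_sum[of m "{..<B}" "C i"] that by simp
    then show "C i \<in> {v \<in> PiE {..<B} (\<lambda>_. {..d i}). (\<Sum>m<B. v m) = d i}"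
      using sum i by (auto simp: C_def)
  qed (simp add: C_def)
  moreover have "b \<in> {b. \<forall>m<B. \<forall>i\<le>r. cell_count r (\<lambda>j. t j - real m) i (b m) = C i m}"
    by (simp add: C_def)
  ultimately show "b \<in> (\<Union>C\<in>PiE {..r} (\<lambda>i. {v \<in> PiE {..<B} (\<lambda>_. {..d i}). (\<Sum>m<B. v m) = d i}).
      {b. \<forall>m<B. \<forall>i\<le>r. cell_count r (\<lambda>j. t j - real m) i (b m) = C i m})"
    by blast
qed (auto simp: increment_count_def PiE_iff)

lemma disjoint_family_on_cell_count_matrices:
  "disjoint_family_on (\<lambda>C. {b. \<forall>m<B. \<forall>i\<le>r. cell_count r (\<lambda>j. t j - real m) i (b m) = C i m})
    (PiE {..r} (\<lambda>i. {v \<in> PiE {..<B} (\<lambda>_. {..d i}). (\<Sum>m<B. v m) = d i}))"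
  unfolding disjoint_family_on_def
proof (intro ballI impI)
  fix C C' assume CC: "C \<in> PiE {..r} (\<lambda>i. {v \<in> PiE {..<B} (\<lambda>_. {..d i}). (\<Sum>m<B. v m) = d i})"
    "C' \<in> PiE {..r} (\<lambda>i. {v \<in> PiE {..<B} (\<lambda>_. {..d i}). (\<Sum>m<B. v m) = d i})" "C \<noteq> C'"
  then obtain i where i: "C i \<noteq> C' i" "i \<le> r"
    using PiE_ext[OF CC(1,2)] by auto
  moreover have "C i \<in> extensional {..<B}" "C' i \<in> extensional {..<B}"
    using CC i by (auto simp: PiE_iff)
  ultimately obtain m where "C i m \<noteq> C' i m" "m < B"
    using extensionalityI[of "C i" "{..<B}" "C' i"] by auto
  then show "{b. \<forall>m<B. \<forall>i\<le>r. cell_count r (\<lambda>j. t j - real m) i (b m) = C i m} \<inter>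
      {b. \<forall>m<B. \<forall>i\<le>r. cell_count r (\<lambda>j. t j - real m) i (b m) = C' i m} = {}"
    using i by auto
qed

theorem emeasure_increment_counts:
  assumes "a > 0" and mono: "\<And>i. Suc i < r \<Longrightarrow> t i \<le> t (Suc i)"
  shows "emeasure (clock_space a) {b. \<forall>i\<le>r. increment_count r t B i b = d i} =
    ennreal (\<Prod>i\<le>r. poisson_weight (\<Sum>m<B. a * cell_length r (\<lambda>j. t j - real m) i) (d i))"
proof -
  define V where "V = (\<lambda>i. {v \<in> PiE {..<B} (\<lambda>_. {..d i}). (\<Sum>m<B. v m) = d i})"
  define P where "P = (\<lambda>C. {b. \<forall>m<B. \<forall>i\<le>r. cell_count r (\<lambda>j. t j - real m) i (b m) = C i m})"
  define x where "x i m = a * cell_length r (\<lambda>j. t j - real m) i" for i m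
  have x: "i \<le> r \<Longrightarrow> 0 \<le> x i m" for i m
    using assms cell_length_nonneg[of r "\<lambda>j. t j - real m"] by (simp add: x_def)
  have V: "finite (V i)" for i
    unfolding V_def by (rule finite_subset[of _ "PiE {..<B} (\<lambda>_. {..d i})"]) (auto intro: finite_PiE)
  have "P C \<in> sets (clock_space a)" for C
  proof -
    have "{b \<in> space (clock_space a). \<forall>m<B. \<forall>i\<le>r. cell_count r (\<lambda>j. t j - real m) i (b m) = C i m}
        \<in> sets (clock_space a)"
      by measurable
    then show ?thesis by (simp add: P_def)
  qed
  moreover have "disjoint_family_on P (PiE {..r} V)"
    unfolding P_def V_def by (rule disjoint_family_on_cell_count_matrices)
  ultimately have "emeasure (clock_space a) {b. \<forall>i\<le>r. increment_count r t B i b = d i} =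
      (\<Sum>C\<in>PiE {..r} V. emeasure (clock_space a) (P C))"
    unfolding increment_count_event_eq V_def[symmetric] P_def[symmetric]
    by (intro sum_emeasure[symmetric]) (auto intro: finite_PiE V)
  also have "\<dots> = (\<Sum>C\<in>PiE {..r} V. ennreal (\<Prod>m<B. \<Prod>i\<le>r. poisson_weight (x i m) (C i m)))"
    unfolding P_def x_def using emeasure_cell_count_matrix[where r = r and t = t, OF assms] by simp
  also have "\<dots> = (\<Sum>C\<in>PiE {..r} V. ennreal (\<Prod>i\<le>r. \<Prod>m<B. poisson_weight (x i m) (C i m)))"
    by (intro sum.cong refl arg_cong[where f = ennreal] prod.swap)
  also have "\<dots> = ennreal (\<Sum>C\<in>PiE {..r} V. \<Prod>i\<le>r. \<Prod>m<B. poisson_weight (x i m) (C i m))"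
    using x by (intro sum_ennreal) (auto intro!: prod_nonneg poisson_weight_nonneg)
  also have "(\<Sum>C\<in>PiE {..r} V. \<Prod>i\<le>r. \<Prod>m<B. poisson_weight (x i m) (C i m)) =
      (\<Prod>i\<le>r. \<Sum>v\<in>V i. \<Prod>m<B. poisson_weight (x i m) (v m))"
    by (rule prod_sum_PiE[symmetric]) (auto intro: V)
  also have "\<dots> = (\<Prod>i\<le>r. poisson_weight (\<Sum>m<B. x i m) (d i))"
  proof (intro prod.cong refl)
    fix i assume "i \<in> {..r}"
    then have "(\<Sum>v\<in>V i. \<Prod>m<B. poisson_weight (x i m) (v m)) =
        (\<Sum>v\<in>PiE {..<B} (\<lambda>_. {..d i}). if (\<Sum>m<B. v m) = d i then \<Prod>m<B. poisson_weight (x i m) (v m) else 0)"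
      unfolding V_def by (intro sum.inter_filter) (auto intro: finite_PiE)
    also have "\<dots> = poisson_weight (\<Sum>m<B. x i m) (d i)"
      using x \<open>i \<in> {..r}\<close> by (intro poisson_weight_sum_PiE) auto
    finally show "(\<Sum>v\<in>V i. \<Prod>m<B. poisson_weight (x i m) (v m)) = poisson_weight (\<Sum>m<B. x i m) (d i)" .
  qed
  finally show ?thesis by (simp add: x_def)
qed

lemma sum_clip01_shifts: "0 \<le> y \<Longrightarrow> (\<Sum>m<B. clip01 (y - real m)) = min y (real B)"
  by (induction B) (auto simp: clip01_def min_def max_def)

lemma sum_cell_length_shifts:
  assumes mono: "\<And>i. Suc i < r \<Longrightarrow> t i \<le> t (Suc i)" and "0 < r \<Longrightarrow> 0 \<le> t 0"
    and "0 < r \<Longrightarrow> t (r - 1) \<le> real B" and "i \<le> r"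
  shows "(\<Sum>m<B. cell_length r (\<lambda>j. t j - real m) i) =
    (if i = r then real B else t i) - (if i = 0 then 0 else t (i - 1))"
proof -
  have "(\<Sum>m<B. clip01 (t j - real m)) = t j" if "j < r" for j
  proof -
    have "t 0 \<le> t j" "t j \<le> t (r - 1)"
      using that by (auto intro: lift_Suc_mono_le_prefix[where f = t, OF mono])
    then show ?thesis using assms(2,3) that sum_clip01_shifts[of "t j" B] by auto
  qed
  then show ?thesis
    using assms(4) by (auto simp: cell_length_def sum_subtractf)
qed

lemma partial_sums_eq_iff:
  fixes f g :: "nat \<Rightarrow> 'a::cancel_comm_monoid_add"
  shows "(\<forall>i<r. (\<Sum>i'\<le>i. f i') = (\<Sum>i'\<le>i. g i')) \<longleftrightarrow> (\<forall>i<r. f i = g i)"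
proof (induction r)
  case (Suc r)
  have "(\<Sum>i'\<le>r. f i') = (\<Sum>i'\<le>r. g i') \<longleftrightarrow> f r = g r" if "\<forall>i<r. f i = g i"
    using that by (simp add: lessThan_Suc_atMost[symmetric])
  then show ?case
    unfolding All_less_Suc Suc.IH by blast
qed simp

lemma poisson_clock_event_eq:
  fixes d :: "nat \<Rightarrow> nat"
  assumes mono: "\<And>i. Suc i < r \<Longrightarrow> ts i \<le> ts (Suc i)" and "ts (r - 1) \<le> real B"
  shows "{b. \<forall>i<r. poisson_clock (ts i) b = (\<Sum>i'\<le>i. d i')} =
    (\<Union>k. {b. \<forall>i\<le>r. increment_count r ts B i b = (d(r := k)) i})"
proof -
  have "(\<forall>i<r. poisson_clock (ts i) b = (\<Sum>i'\<le>i. d i')) \<longleftrightarrow> (\<forall>i<r. increment_count r ts B i b = d i)" for b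
    using poisson_clock_eq_sum_increments[OF mono _ assms(2)]
      partial_sums_eq_iff[of r "\<lambda>i. increment_count r ts B i b" d] by simp
  then show ?thesis by auto
qed

lemma emeasure_poisson_clock:
  fixes r :: nat and ts :: "nat \<Rightarrow> real" and d :: "nat \<Rightarrow> nat"
  assumes "a > 0" and t0: "0 < r \<Longrightarrow> 0 \<le> ts 0" and mono: "\<And>i. Suc i < r \<Longrightarrow> ts i \<le> ts (Suc i)"
  shows "emeasure (clock_space a) {b. \<forall>i<r. poisson_clock (ts i) b = (\<Sum>i'\<le>i. d i')} =
    ennreal (\<Prod>i<r. poisson_weight (a * (ts i - (if i = 0 then 0 else ts (i - 1)))) (d i))"
proof -
  define B where "B = nat \<lceil>ts (r - 1)\<rceil>"
  define L where "L i = (if i = r then real B else ts i) - (if i = 0 then 0 else ts (i - 1))" for i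
  define E where "E k = {b. \<forall>i\<le>r. increment_count r ts B i b = (d(r := k)) i}" for k
  have tB: "ts (r - 1) \<le> real B" by (simp add: B_def) linarith
  have L: "(\<Sum>m<B. a * cell_length r (\<lambda>j. ts j - real m) i) = a * L i" if "i \<le> r" for i
    using sum_cell_length_shifts[OF mono t0 tB that] by (simp add: L_def sum_distrib_left[symmetric])
  have L0: "0 \<le> L i" if "i \<le> r" for i
  proof -
    have "0 \<le> (\<Sum>m<B. a * cell_length r (\<lambda>j. ts j - real m) i)"
      using assms(1) mono that by (intro sum_nonneg mult_nonneg_nonneg cell_length_nonneg) auto
    then show ?thesis using L[OF that] assms(1) by (simp add: zero_le_mult_iff)
  qed
  have "{b. \<forall>i<r. poisson_clock (ts i) b = (\<Sum>i'\<le>i. d i')} = (\<Union>k. E k)"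
    unfolding E_def by (rule poisson_clock_event_eq[OF mono tB])
  moreover have "E k \<in> sets (clock_space a)" for k
  proof -
    have "{b \<in> space (clock_space a). \<forall>i\<le>r. increment_count r ts B i b = (d(r := k)) i} \<in> sets (clock_space a)"
      by measurable
    then show ?thesis by (simp add: E_def)
  qed
  moreover have "disjoint_family E"
    by (auto simp: disjoint_family_on_def E_def)
  ultimately have "emeasure (clock_space a) {b. \<forall>i<r. poisson_clock (ts i) b = (\<Sum>i'\<le>i. d i')} =
      (\<Sum>k. emeasure (clock_space a) (E k))"
    by (simp add: suminf_emeasure image_subset_iff)
  also have "\<dots> = (\<Sum>k. ennreal (\<Prod>i<r. poisson_weight (a * L i) (d i)) * ennreal (poisson_weight (a * L r) k))"
  proof (intro suminf_cong)
    fix k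
    have "0 \<le> (\<Prod>i<r. poisson_weight (a * L i) (d i))" "0 \<le> poisson_weight (a * L r) k"
      using assms(1) L0 by (auto intro!: prod_nonneg poisson_weight_nonneg)
    moreover have "(\<Prod>i\<le>r. poisson_weight (a * L i) ((d(r := k)) i)) =
        (\<Prod>i<r. poisson_weight (a * L i) (d i)) * poisson_weight (a * L r) k"
      by (simp add: lessThan_Suc_atMost[symmetric])
    ultimately show "emeasure (clock_space a) (E k) =
        ennreal (\<Prod>i<r. poisson_weight (a * L i) (d i)) * ennreal (poisson_weight (a * L r) k)"
      using emeasure_increment_counts[where r = r and t = ts and B = B and d = "d(r := k)", OF assms(1) mono] L
      by (simp add: E_def ennreal_mult[symmetric])
  qed
  also have "\<dots> = ennreal (\<Prod>i<r. poisson_weight (a * L i) (d i))"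
    using suminf_ennreal_poisson_weight[of "a * L r"] assms(1) L0[of r] by simp
  finally show ?thesis
    by (simp add: L_def)
qed

text \<open>The increments over \<open>[0, t 0], (t 0, t 1], \<dots>\<close> are independent Poisson variables; their joint
  law is stated through the partial sums \<open>d 0 + \<dots> + d i\<close> of prescribed increments.\<close>

definition poisson_counting_process :: "real \<Rightarrow> 'b measure \<Rightarrow> (real \<Rightarrow> 'b \<Rightarrow> nat) \<Rightarrow> bool" where
  "poisson_counting_process alpha P N \<longleftrightarrow>
     prob_space P \<and> (\<forall>t. N t \<in> measurable P (count_space UNIV)) \<and>
     (\<forall>b s t. s \<le> t \<longrightarrow> N s b \<le> N t b) \<and>
     (\<forall>(r::nat) (ts::nat \<Rightarrow> real) (d::nat \<Rightarrow> nat).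
        (0 < r \<longrightarrow> 0 \<le> ts 0) \<and> (\<forall>i. Suc i < r \<longrightarrow> ts i \<le> ts (Suc i)) \<longrightarrow>
        emeasure P {b \<in> space P. \<forall>i<r. N (ts i) b = (\<Sum>i'\<le>i. d i')} =
          ennreal (\<Prod>i<r. poisson_weight (alpha * (ts i - (if i = 0 then 0 else ts (i - 1)))) (d i)))"

theorem poisson_counting_process_clock:
  "a > 0 \<Longrightarrow> poisson_counting_process a (clock_space a) poisson_clock"
  unfolding poisson_counting_process_def
  using prob_space_clock_space poisson_clock_mono emeasure_poisson_clock by auto

section \<open>Subordinating the jump chain to a Poisson counting process\<close>

lemma poisson_weight_kernel_pow_abs_summable:
  assumes "lam > 0" "mu > 0" "0 \<le> a"
  shows "Infinite_Set_Sum.abs_summable_on (\<lambda>k. poisson_weight a k * ucat_kernel_pow lam mu k i j) UNIV"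
proof (rule abs_summable_on_comparison_test'[OF poisson_weight_abs_summable[OF assms(3)]])
  fix k
  show "norm (poisson_weight a k * ucat_kernel_pow lam mu k i j) \<le> poisson_weight a k"
    using ucat_kernel_pow_le_1[OF assms(1,2)] ucat_kernel_pow_nonneg[OF assms(1,2)]
      poisson_weight_nonneg[OF assms(3)]
    by (simp add: abs_mult mult_left_le)
qed

lemma ucat_trans_eq_infsetsum:
  assumes "lam > 0" "mu > 0" "0 \<le> alpha * t"
  shows "ucat_trans lam mu alpha t i j =
    infsetsum (\<lambda>k. poisson_weight (alpha * t) k * ucat_kernel_pow lam mu k i j) UNIV"
  using infsetsum_nat'[OF poisson_weight_kernel_pow_abs_summable[OF assms]]
  by (simp add: ucat_trans_def poisson_weight_def)

lemma ucat_trans_nonneg: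
  assumes "lam > 0" "mu > 0" "0 \<le> alpha * t"
  shows "0 \<le> ucat_trans lam mu alpha t i j"
  unfolding ucat_trans_eq_infsetsum[OF assms]
  by (intro infsetsum_nonneg mult_nonneg_nonneg poisson_weight_nonneg[OF assms(3)]
      ucat_kernel_pow_nonneg[OF assms(1,2)])

lemma sum_increments_telescope:
  fixes f :: "nat \<Rightarrow> nat"
  assumes "\<And>i. Suc i < r \<Longrightarrow> f i \<le> f (Suc i)" "i < r"
  shows "(\<Sum>i'\<le>i. f i' - (if i' = 0 then 0 else f (i' - 1))) = f i"
  using assms(2) by (induction i) (auto dest: assms(1))

lemma subordinated_chain_event_eq:
  fixes r :: nat and ts :: "nat \<Rightarrow> real"
  assumes N_mono: "\<And>b s t. s \<le> t \<Longrightarrow> N s b \<le> N t b"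
    and mono: "\<And>i. Suc i < r \<Longrightarrow> ts i \<le> ts (Suc i)"
  shows "{p \<in> space (uniform_seq \<Otimes>\<^sub>M P). \<forall>i<r. jump_chain lam mu x (fst p) (N (ts i) (snd p)) = ks i} =
    (\<Union>d\<in>PiE {..<r} (\<lambda>_. UNIV). {u. \<forall>i<r. jump_chain lam mu x u (\<Sum>i'\<le>i. d i') = ks i} \<times>
      {b \<in> space P. \<forall>i<r. N (ts i) b = (\<Sum>i'\<le>i. d i')})"
proof (intro set_eqI iffI)
  fix p assume p: "p \<in> {p \<in> space (uniform_seq \<Otimes>\<^sub>M P). \<forall>i<r. jump_chain lam mu x (fst p) (N (ts i) (snd p)) = ks i}"
  define d where "d = (\<lambda>i\<in>{..<r}. N (ts i) (snd p) - (if i = 0 then 0 else N (ts (i - 1)) (snd p)))"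
  have "(\<Sum>i'\<le>i. d i') = N (ts i) (snd p)" if "i < r" for i
    using sum_increments_telescope[of r "\<lambda>i. N (ts i) (snd p)" i] that N_mono mono
    by (simp add: d_def)
  then show "p \<in> (\<Union>d\<in>PiE {..<r} (\<lambda>_. UNIV). {u. \<forall>i<r. jump_chain lam mu x u (\<Sum>i'\<le>i. d i') = ks i} \<times>
      {b \<in> space P. \<forall>i<r. N (ts i) b = (\<Sum>i'\<le>i. d i')})"
    using p by (intro UN_I[of d]) (auto simp: d_def space_pair_measure mem_Times_iff)
qed (auto simp: space_pair_measure)

lemma disjoint_family_on_partial_sum_events:
  fixes r :: nat
  shows "disjoint_family_on (\<lambda>d::nat \<Rightarrow> nat. {b \<in> space P. \<forall>i<r. N (ts i) b = (\<Sum>i'\<le>i. d i')})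
    (PiE {..<r} (\<lambda>_. UNIV))"
  unfolding disjoint_family_on_def
proof (intro ballI impI)
  fix d d' :: "nat \<Rightarrow> nat"
  assume dd: "d \<in> PiE {..<r} (\<lambda>_. UNIV)" "d' \<in> PiE {..<r} (\<lambda>_. UNIV)" "d \<noteq> d'"
  then have "\<not> (\<forall>i<r. d i = d' i)"
    using PiE_ext[OF dd(1,2)] by auto
  then show "{b \<in> space P. \<forall>i<r. N (ts i) b = (\<Sum>i'\<le>i. d i')} \<inter>
      {b \<in> space P. \<forall>i<r. N (ts i) b = (\<Sum>i'\<le>i. d' i')} = {}"
    using partial_sums_eq_iff[of r d d'] by auto
qed

lemma emeasure_subordinated_chain_rectangle:
  fixes r :: nat and ts :: "nat \<Rightarrow> real" and d ks :: "nat \<Rightarrow> nat"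
  assumes "lam > 0" "mu > 0" "alpha > 0" and N: "poisson_counting_process alpha P N"
    and t0: "0 < r \<Longrightarrow> 0 \<le> ts 0" and mono: "\<And>i. Suc i < r \<Longrightarrow> ts i \<le> ts (Suc i)"
  shows "emeasure (uniform_seq \<Otimes>\<^sub>M P)
      ({u. \<forall>i<r. jump_chain lam mu x u (\<Sum>i'\<le>i. d i') = ks i} \<times>
       {b \<in> space P. \<forall>i<r. N (ts i) b = (\<Sum>i'\<le>i. d i')}) =
    ennreal (\<Prod>i<r. poisson_weight (alpha * (ts i - (if i = 0 then 0 else ts (i - 1)))) (d i) *
      ucat_kernel_pow lam mu (d i) (if i = 0 then x else ks (i - 1)) (ks i))"
proof -
  interpret P: prob_space P using N by (simp add: poisson_counting_process_def)
  have N_meas [measurable]: "N t \<in> measurable P (count_space UNIV)" for t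
    using N by (simp add: poisson_counting_process_def)
  have "0 \<le> alpha * (ts i - (if i = 0 then 0 else ts (i - 1)))" if "i < r" for i
    using assms(3) t0 that mono[of "i - 1"] by auto
  then have "0 \<le> (\<Prod>i<r. poisson_weight (alpha * (ts i - (if i = 0 then 0 else ts (i - 1)))) (d i))"
    by (auto intro!: prod_nonneg poisson_weight_nonneg)
  moreover have "{b \<in> space P. \<forall>i<r. N (ts i) b = (\<Sum>i'\<le>i. d i')} \<in> sets P"
    by measurable
  ultimately show ?thesis
    using N t0 mono unfolding poisson_counting_process_def
    by (simp add: P.emeasure_pair_measure_Times sets_jump_chain_event prod.distrib ennreal_mult
        emeasure_jump_chain_partial_sums[OF assms(1,2)] ucat_kernel_pow_nonneg[OF assms(1,2)]
        prod_nonneg mult.commute)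
qed

theorem emeasure_subordinated_chain:
  fixes r :: nat and ts :: "nat \<Rightarrow> real" and ks :: "nat \<Rightarrow> nat"
  assumes "lam > 0" "mu > 0" "alpha > 0" and N: "poisson_counting_process alpha P N"
    and t0: "0 < r \<Longrightarrow> 0 \<le> ts 0" and mono: "\<And>i. Suc i < r \<Longrightarrow> ts i \<le> ts (Suc i)"
  shows "emeasure (uniform_seq \<Otimes>\<^sub>M P)
      {p \<in> space (uniform_seq \<Otimes>\<^sub>M P). \<forall>i<r. jump_chain lam mu x (fst p) (N (ts i) (snd p)) = ks i} =
    ennreal (\<Prod>i<r. ucat_trans lam mu alpha (ts i - (if i = 0 then 0 else ts (i - 1)))
      (if i = 0 then x else ks (i - 1)) (ks i))"
proof -
  have N_meas [measurable]: "N t \<in> measurable P (count_space UNIV)" for t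
    using N by (simp add: poisson_counting_process_def)
  define L where "L i = ts i - (if i = 0 then 0 else ts (i - 1))" for i
  define g where "g i k = poisson_weight (alpha * L i) k *
    ucat_kernel_pow lam mu k (if i = 0 then x else ks (i - 1)) (ks i)" for i k
  define A where "A d = {u. \<forall>i<r. jump_chain lam mu x u (\<Sum>i'\<le>i. d i') = ks i}" for d
  define C where "C d = {b \<in> space P. \<forall>i<r. N (ts i) b = (\<Sum>i'\<le>i. d i')}" for d
  have L_nonneg: "0 \<le> L i" if "i < r" for i
    using t0 that mono[of "i - 1"] by (auto simp: L_def)
  then have L: "0 \<le> alpha * L i" if "i < r" for i
    using assms(3) that by simp
  have g: "Infinite_Set_Sum.abs_summable_on (g i) UNIV" if "i < r" for i
    unfolding g_def by (rule poisson_weight_kernel_pow_abs_summable[OF assms(1,2) L[OF that]])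
  have "emeasure (uniform_seq \<Otimes>\<^sub>M P) (\<Union>d\<in>PiE {..<r} (\<lambda>_. UNIV). A d \<times> C d) =
      (\<integral>\<^sup>+d. emeasure (uniform_seq \<Otimes>\<^sub>M P) (A d \<times> C d) \<partial>count_space (PiE {..<r} (\<lambda>_. UNIV)))"
    using disjoint_family_on_partial_sum_events[of P r N ts]
    by (intro emeasure_UN_countable)
      (auto simp: A_def C_def sets_jump_chain_event countable_PiE disjoint_family_on_def)
  also have "\<dots> = (\<integral>\<^sup>+d. ennreal (\<Prod>i<r. g i (d i)) \<partial>count_space (PiE {..<r} (\<lambda>_. UNIV)))"
    unfolding A_def C_def g_def L_def
    by (intro nn_integral_cong emeasure_subordinated_chain_rectangle[OF assms])
  also have "\<dots> = ennreal (infsetsum (\<lambda>d. \<Prod>i<r. g i (d i)) (PiE {..<r} (\<lambda>_. UNIV)))"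
    using g L_nonneg assms(3) by (intro nn_integral_conv_infsetsum abs_summable_on_prod_PiE)
      (auto intro!: prod_nonneg mult_nonneg_nonneg poisson_weight_nonneg ucat_kernel_pow_nonneg
        simp: g_def assms(1,2))
  also have "infsetsum (\<lambda>d. \<Prod>i<r. g i (d i)) (PiE {..<r} (\<lambda>_. UNIV)) = (\<Prod>i<r. infsetsum (g i) UNIV)"
    using g by (intro infsetsum_prod_PiE) auto
  also have "\<dots> = (\<Prod>i<r. ucat_trans lam mu alpha (ts i - (if i = 0 then 0 else ts (i - 1)))
      (if i = 0 then x else ks (i - 1)) (ks i))"
    using L by (intro prod.cong refl) (simp add: g_def L_def ucat_trans_eq_infsetsum[OF assms(1,2)])
  finally show ?thesis
    using N mono by (simp add: subordinated_chain_event_eq poisson_counting_process_def A_def C_def)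
qed

theorem ucat_process_subordinated:
  assumes "lam > 0" "mu > 0" "alpha > 0" and N: "poisson_counting_process alpha P N"
  shows "ucat_process lam mu alpha x (uniform_seq \<Otimes>\<^sub>M P) (\<lambda>t p. jump_chain lam mu x (fst p) (N t (snd p)))"
  unfolding ucat_process_def
proof (intro conjI allI impI)
  interpret P: prob_space P using N by (simp add: poisson_counting_process_def)
  have N_meas [measurable]: "N t \<in> measurable P (count_space UNIV)" for t
    using N by (simp add: poisson_counting_process_def)
  show meas: "(\<lambda>p. jump_chain lam mu x (fst p) (N t (snd p))) \<in> measurable (uniform_seq \<Otimes>\<^sub>M P) (count_space UNIV)"
    for t
    by (rule measurable_compose_countable'[where I = UNIV and g = "\<lambda>p. N t (snd p)"]) auto
  fix n and ts :: "nat \<Rightarrow> real" and ks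
  assume ts: "(0 < n \<longrightarrow> 0 \<le> ts 0) \<and> (\<forall>i. Suc i < n \<longrightarrow> ts i \<le> ts (Suc i))"
  have "0 \<le> ts i - (if i = 0 then 0 else ts (i - 1))" if "i < n" for i
    using ts that by (cases i) auto
  then have "0 \<le> (\<Prod>i<n. ucat_trans lam mu alpha (ts i - (if i = 0 then 0 else ts (i - 1)))
      (if i = 0 then x else ks (i - 1)) (ks i))"
    using assms(3) by (intro prod_nonneg ucat_trans_nonneg[OF assms(1,2)]) auto
  then show "measure (uniform_seq \<Otimes>\<^sub>M P)
      {p \<in> space (uniform_seq \<Otimes>\<^sub>M P). \<forall>i<n. jump_chain lam mu x (fst p) (N (ts i) (snd p)) = ks i} =
    (\<Prod>i<n. ucat_trans lam mu alpha (ts i - (if i = 0 then 0 else ts (i - 1)))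
      (if i = 0 then x else ks (i - 1)) (ks i))"
    using ts by (simp add: measure_def emeasure_subordinated_chain[OF assms])
qed

section \<open>Transport to the sequence space\<close>

lemma ucat_process_distr:
  assumes X: "ucat_process lam mu alpha x M X"
    and f: "f \<in> measurable M N" and g: "g \<in> measurable N M" and gf: "\<And>\<omega>. \<omega> \<in> space M \<Longrightarrow> g (f \<omega>) = \<omega>"
  shows "ucat_process lam mu alpha x (distr M N f) (\<lambda>t. X t \<circ> g)"
  unfolding ucat_process_def
proof (intro conjI allI impI)
  have X_meas: "X t \<in> measurable M (count_space UNIV)" if "0 \<le> t" for t
    using X that by (simp add: ucat_process_def)
  show "X t \<circ> g \<in> measurable (distr M N f) (count_space UNIV)" if "0 \<le> t" for t
    using measurable_comp[OF g X_meas[OF that]] by simp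
  fix n and ts :: "nat \<Rightarrow> real" and ks
  assume ts: "(0 < n \<longrightarrow> 0 \<le> ts 0) \<and> (\<forall>i. Suc i < n \<longrightarrow> ts i \<le> ts (Suc i))"
  have "0 \<le> ts i" if "i < n" for i
    using ts that lift_Suc_mono_le_prefix[where f = ts and r = n and i = 0 and j = i] by auto
  then have "{\<omega> \<in> space N. (X (ts i) \<circ> g) \<omega> = ks i} \<in> sets N" if "i \<in> {..<n}" for i
    using measurable_sets[OF measurable_comp[OF g X_meas], of "ts i" "{ks i}"] that
    by (simp add: vimage_def Int_def conj_commute)
  then have S: "{\<omega> \<in> space N. \<forall>i\<in>{..<n}. (X (ts i) \<circ> g) \<omega> = ks i} \<in> sets N"
    by (intro sets.sets_Collect_finite_All) auto
  have "measure (distr M N f) {\<omega> \<in> space (distr M N f). \<forall>i<n. (X (ts i) \<circ> g) \<omega> = ks i} =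
      measure M (f -` {\<omega> \<in> space N. \<forall>i\<in>{..<n}. (X (ts i) \<circ> g) \<omega> = ks i} \<inter> space M)"
    using measure_distr[OF f S] by (simp add: Ball_def)
  also have "f -` {\<omega> \<in> space N. \<forall>i\<in>{..<n}. (X (ts i) \<circ> g) \<omega> = ks i} \<inter> space M =
      {\<omega> \<in> space M. \<forall>i<n. X (ts i) \<omega> = ks i}"
    using measurable_space[OF f] gf by auto
  also have "measure M \<dots> = (\<Prod>i<n. ucat_trans lam mu alpha (ts i - (if i = 0 then 0 else ts (i - 1)))
      (if i = 0 then x else ks (i - 1)) (ks i))"
    using X ts unfolding ucat_process_def by blast
  finally show "measure (distr M N f) {\<omega> \<in> space (distr M N f). \<forall>i<n. (X (ts i) \<circ> g) \<omega> = ks i} =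
      (\<Prod>i<n. ucat_trans lam mu alpha (ts i - (if i = 0 then 0 else ts (i - 1)))
        (if i = 0 then x else ks (i - 1)) (ks i))" .
qed

definition interleave :: "(nat \<Rightarrow> real) \<times> (nat \<Rightarrow> nat \<Rightarrow> real) \<Rightarrow> nat \<Rightarrow> real" where
  "interleave p n = (if even n then fst p (n div 2)
     else snd p (fst (prod_decode (n div 2))) (snd (prod_decode (n div 2))))"

definition deinterleave :: "(nat \<Rightarrow> real) \<Rightarrow> (nat \<Rightarrow> real) \<times> (nat \<Rightarrow> nat \<Rightarrow> real)" where
  "deinterleave \<omega> = (\<lambda>k. \<omega> (2 * k), \<lambda>m j. \<omega> (2 * prod_encode (m, j) + 1))"

lemma deinterleave_interleave: "deinterleave (interleave p) = p"
proof -
  have "fst (deinterleave (interleave p)) = fst p" "snd (deinterleave (interleave p)) = snd p"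
    by (auto simp: deinterleave_def interleave_def fun_eq_iff)
  then show ?thesis by (simp add: prod_eq_iff)
qed

lemma sets_uniform_seq: "sets uniform_seq = sets (PiM UNIV (\<lambda>_::nat. borel :: real measure))"
  by (rule sets_PiM_cong) auto

lemma sets_clock_space:
  "sets (clock_space a) = sets (PiM UNIV (\<lambda>_::nat. PiM UNIV (\<lambda>_::nat. borel :: real measure)))"
  by (rule sets_PiM_cong) (auto simp: sets_block_measure)

lemma interleave_measurable:
  "interleave \<in> measurable (uniform_seq \<Otimes>\<^sub>M clock_space a) (PiM UNIV (\<lambda>_. borel))"
  unfolding interleave_def
proof (rule measurable_PiM_single')
  fix n :: nat
  have "(\<lambda>p. fst p (n div 2)) \<in> borel_measurable (uniform_seq \<Otimes>\<^sub>M clock_space a)"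
    by (rule measurable_compose[OF measurable_fst]) (simp add: measurable_cong_sets[OF sets_uniform_seq refl])
  moreover have "(\<lambda>p. snd p m j) \<in> borel_measurable (uniform_seq \<Otimes>\<^sub>M clock_space a)" for m j
  proof (rule measurable_compose[OF measurable_snd])
    have "(\<lambda>b. b m j) \<in> borel_measurable (PiM UNIV (\<lambda>_::nat. PiM UNIV (\<lambda>_::nat. borel :: real measure)))"
    proof (rule measurable_compose[where f = "\<lambda>b. b m" and g = "\<lambda>f. f j"])
      show "(\<lambda>b. b m) \<in> measurable (PiM UNIV (\<lambda>_::nat. PiM UNIV (\<lambda>_::nat. borel :: real measure)))
          (PiM UNIV (\<lambda>_::nat. borel :: real measure))"
        by (rule measurable_component_singleton) simp
      show "(\<lambda>f. f j) \<in> borel_measurable (PiM UNIV (\<lambda>_::nat. borel :: real measure))"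
        by (rule measurable_component_singleton) simp
    qed
    then show "(\<lambda>b. b m j) \<in> borel_measurable (clock_space a)"
      by (simp add: measurable_cong_sets[OF sets_clock_space refl])
  qed
  ultimately show "(\<lambda>p. if even n then fst p (n div 2)
      else snd p (fst (prod_decode (n div 2))) (snd (prod_decode (n div 2))))
    \<in> borel_measurable (uniform_seq \<Otimes>\<^sub>M clock_space a)"
    by (cases "even n") simp_all
qed (auto simp: space_pair_measure)

lemma deinterleave_measurable:
  "deinterleave \<in> measurable (PiM UNIV (\<lambda>_. borel)) (uniform_seq \<Otimes>\<^sub>M clock_space a)"
  unfolding deinterleave_def
proof (rule measurable_Pair)
  show "(\<lambda>\<omega>. \<lambda>k. \<omega> (2 * k)) \<in> measurable (PiM UNIV (\<lambda>_. borel)) uniform_seq"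
    unfolding measurable_cong_sets[OF refl sets_uniform_seq]
    by (rule measurable_PiM_single') (auto simp: space_PiM)
  show "(\<lambda>\<omega>. \<lambda>m j. \<omega> (2 * prod_encode (m, j) + 1)) \<in> measurable (PiM UNIV (\<lambda>_. borel)) (clock_space a)"
    unfolding measurable_cong_sets[OF refl sets_clock_space]
    by (intro measurable_PiM_single') (auto simp: space_PiM)
qed

definition coupling_space :: "real \<Rightarrow> (nat \<Rightarrow> real) measure" where
  "coupling_space alpha = distr (uniform_seq \<Otimes>\<^sub>M clock_space alpha) (PiM UNIV (\<lambda>_. borel)) interleave"

definition coupled_process :: "real \<Rightarrow> real \<Rightarrow> nat \<Rightarrow> real \<Rightarrow> (nat \<Rightarrow> real) \<Rightarrow> nat" where
  "coupled_process lam mu x t \<omega> =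
     jump_chain lam mu x (fst (deinterleave \<omega>)) (poisson_clock t (snd (deinterleave \<omega>)))"

lemma prob_space_coupling_space: "alpha > 0 \<Longrightarrow> prob_space (coupling_space alpha)"
  unfolding coupling_space_def
  by (intro prob_space.prob_space_distr prob_space_pair prob_space_uniform_seq prob_space_clock_space
      interleave_measurable)

lemma ucat_process_coupled_process:
  assumes "lam > 0" "mu > 0" "alpha > 0"
  shows "ucat_process lam mu alpha x (coupling_space alpha) (coupled_process lam mu x)"
proof -
  have "ucat_process lam mu alpha x (coupling_space alpha)
      (\<lambda>t. (\<lambda>p. jump_chain lam mu x (fst p) (poisson_clock t (snd p))) \<circ> deinterleave)"
    unfolding coupling_space_def
    by (rule ucat_process_distr[OF ucat_process_subordinated[OF assms poisson_counting_process_clock[OF assms(3)]]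
        interleave_measurable deinterleave_measurable]) (simp add: deinterleave_interleave)
  then show ?thesis
    by (simp add: coupled_process_def[abs_def] comp_def)
qed

theorem lemma4p4:
  fixes lam mu alpha :: real and x y :: nat
  assumes "lam > 0" and "mu > 0" and "alpha > 0"
  shows "\<exists>(M :: (nat \<Rightarrow> real) measure) Xt Xh.
           prob_space M \<and>
           ucat_process lam mu alpha x M Xt \<and>
           ucat_process lam mu alpha y M Xh \<and>
           (AE \<omega> in M. \<forall>t\<ge>0. \<bar>int (Xt t \<omega>) - int (Xh t \<omega>)\<bar> \<le> \<bar>int x - int y\<bar>)"
proof (intro exI conjI)
  show "prob_space (coupling_space alpha)"
    by (rule prob_space_coupling_space[OF assms(3)])
  show "ucat_process lam mu alpha x (coupling_space alpha) (coupled_process lam mu x)"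
    and "ucat_process lam mu alpha y (coupling_space alpha) (coupled_process lam mu y)"
    by (rule ucat_process_coupled_process[OF assms])+
  show "AE \<omega> in coupling_space alpha. \<forall>t\<ge>0.
      \<bar>int (coupled_process lam mu x t \<omega>) - int (coupled_process lam mu y t \<omega>)\<bar> \<le> \<bar>int x - int y\<bar>"
    by (intro AE_I2 allI impI) (simp add: coupled_process_def jump_chain_lipschitz[OF assms(1,2)])
qed

end
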